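(* Let $L:[0,T]\times\mathbb{R}^N\times\mathbb{R}^N\to\mathbb{R}\cup\{\pm\infty\}$ satisfy (L1)–(L5), let $g:\mathbb{R}^N\to\mathbb{R}\cup\{\pm\infty\}$ be proper and lower semicontinuous, and let $V$ be the value function associated with $L$ and $g$. Then for every $(t_0,x_0)\in\mathrm{dom}\,V\cap(0,T]\times\mathbb{R}^N$ and every $v_0\in\mathrm{dom}\,L(t_0,x_0,\cdot)$, one has $dV(t_0,x_0)(-1,-v_0)\leq L(t_0,x_0,v_0)$.
   Context: $\mathbb{B}_R$ is the closed ball of radius $R$ at $0$; $\mathrm{dom}\,\varphi=\{z:\varphi(z)\neq\pm\infty\}$; $\varphi$ is proper if it never equals $-\infty$ and is not identically $+\infty$. Value function: for $t_0\in[0,T)$, $V(t_0,x_0)=\inf\{g(x(T))+\int_{t_0}^TL(t,x(t),\dot x(t))\,dt\}$ over absolutely continuous $x:[t_0,T]\to\mathbb{R}^N$ with $x(t_0)=x_0$; $V(T,x_0)=g(x_0)$. $V$ is regarded as $+\infty$ outside $[0,T]\times\mathbb{R}^N$. Subderivative at $z$ with $\varphi(z)$ finite: $d\varphi(z)(v)=\liminf_{\tau\to0^+,\,y\to v}(\varphi(z+\tau y)-\varphi(z))/\tau$. (L1) $L$ is lower semicontinuous in all variables. (L2) $L(t,x,\cdot)$ is convex and proper for every $t,x$. (L3) for every $(t,x,v)$ and every $(t_n,x_n)\to(t,x)$ there exist $v_n\to v$ with $L(t_n,x_n,v_n)\to L(t,x,v)$. (L4) for every $R\geq0$ there is $C_R\geq0$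 with $L(t,x,v)=+\infty$ whenever $t\in[0,T]$, $x\in\mathbb{B}_R$, $|v|>C_R$. (L5) there are an integrable $c:[0,T]\to[0,\infty)$ and a null set $\mathcal{N}$ with $L(t,x,v)=+\infty$ whenever $t\notin\mathcal{N}$ and $|v|>c(t)(1+|x|)$. *)

theory Defs
  imports "HOL-Analysis.Analysis"
begin

definition proper_fn :: "('b \<Rightarrow> ereal) \<Rightarrow> bool" where
  "proper_fn \<phi> \<longleftrightarrow> (\<forall>z. \<phi> z \<noteq> -\<infinity>) \<and> (\<exists>z. \<phi> z \<noteq> \<infinity>)"

definition lsc_on :: "'b::metric_space set \<Rightarrow> ('b \<Rightarrow> ereal) \<Rightarrow> bool" where
  "lsc_on S f \<longleftrightarrow> (\<forall>z\<in>S. \<forall>X. (\<forall>n. X n \<in> S) \<longrightarrow> X \<longlonglongrightarrow> z \<longrightarrow> f z \<le> liminf (\<lambda>n. f (X n)))"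

text \<open>Convexity of an extended-real valued function (with \<open>0 * \<infinity> = 0\<close>).\<close>
definition ereal_convex :: "('b::real_vector \<Rightarrow> ereal) \<Rightarrow> bool" where
  "ereal_convex f \<longleftrightarrow> (\<forall>u v (s::real). 0 \<le> s \<longrightarrow> s \<le> 1 \<longrightarrow>
     f (s *\<^sub>R u + (1 - s) *\<^sub>R v) \<le> ereal s * f u + ereal (1 - s) * f v)"

definition abs_cont_on :: "real \<Rightarrow> real \<Rightarrow> (real \<Rightarrow> 'b::real_normed_vector) \<Rightarrow> bool" where
  "abs_cont_on a b x \<longleftrightarrow>
     (\<forall>\<epsilon>>0. \<exists>\<delta>>0. \<forall>(n::nat) (l::nat \<Rightarrow> real) (r::nat \<Rightarrow> real).
        (\<forall>k<n. a \<le> l k \<and> l k \<le> r k \<and> r k \<le> b) \<longrightarrow>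
        (\<forall>i<n. \<forall>j<n. i \<noteq> j \<longrightarrow> {l i<..<r i} \<inter> {l j<..<r j} = {}) \<longrightarrow>
        (\<Sum>k<n. r k - l k) < \<delta> \<longrightarrow>
        (\<Sum>k<n. norm (x (r k) - x (l k))) < \<epsilon>)"

definition ext_integral :: "real set \<Rightarrow> (real \<Rightarrow> ereal) \<Rightarrow> ereal" where
  "ext_integral S h =
     (if (\<integral>\<^sup>+ t\<in>S. e2ennreal (- h t) \<partial>lebesgue) = \<infinity> then \<infinity>
      else enn2ereal (\<integral>\<^sup>+ t\<in>S. e2ennreal (h t) \<partial>lebesgue)
         - enn2ereal (\<integral>\<^sup>+ t\<in>S. e2ennreal (- h t) \<partial>lebesgue))"

definition value_fn :: "real \<Rightarrow> (real \<Rightarrow> 'a::euclidean_space \<Rightarrow> 'a \<Rightarrow> ereal) \<Rightarrow> ('a \<Rightarrow> ereal)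
    \<Rightarrow> real \<times> 'a \<Rightarrow> ereal" where
  "value_fn T L g = (\<lambda>(t0, x0).
     if t0 = T then g x0
     else if 0 \<le> t0 \<and> t0 < T then
       (INF x \<in> {x. abs_cont_on t0 T x \<and> x t0 = x0}.
          g (x T) + ext_integral {t0..T}
            (\<lambda>t. L t (x t) (vector_derivative x (at t within {t0..T}))))
     else \<infinity>)"

definition subderiv :: "('b::real_normed_vector \<Rightarrow> ereal) \<Rightarrow> 'b \<Rightarrow> 'b \<Rightarrow> ereal" where
  "subderiv \<phi> z w = Liminf (at_right (0::real) \<times>\<^sub>F nhds w)
      (\<lambda>(\<tau>, y). (\<phi> (z + \<tau> *\<^sub>R y) - \<phi> z) / ereal \<tau>)"

end

theory Submission
  imports Defs "HOL-Library.Diagonal_Subsequence"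
begin

text \<open>Fix \<open>\<epsilon> > 0\<close>. Convexity of \<open>L(t, x, \<cdot>)\<close> and hypothesis (L3) make the velocities \<open>v\<close> near
  \<open>v\<^sub>0\<close> with \<open>L(t, x, v) < L(t\<^sub>0, x\<^sub>0, v\<^sub>0) + \<epsilon>\<close> a convex-valued, lower hemicontinuous
  multifunction of \<open>(t, x)\<close> near \<open>(t\<^sub>0, x\<^sub>0)\<close>. Michael's selection theorem gives a continuous
  selection \<open>f\<close>, and Peano's theorem an arc \<open>y' = f(t, y)\<close> on \<open>[t\<^sub>0 - \<tau>, t\<^sub>0]\<close> ending at
  \<open>x\<^sub>0\<close>. Its running cost is at most \<open>\<tau> (L(t\<^sub>0, x\<^sub>0, v\<^sub>0) + \<epsilon>)\<close> and its initial point is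
  \<open>x\<^sub>0 - \<tau> u\<close> with \<open>u\<close> close to \<open>v\<^sub>0\<close>, so the dynamic programming inequality
  \<open>V(t\<^sub>0 - \<tau>, x\<^sub>0 - \<tau> u) \<le> V(t\<^sub>0, x\<^sub>0) + \<tau> (L(t\<^sub>0, x\<^sub>0, v\<^sub>0) + \<epsilon>)\<close> bounds the
  difference quotients defining \<open>dV(t\<^sub>0, x\<^sub>0)(-1, -v\<^sub>0)\<close>.\<close>

section \<open>Michael's selection theorem\<close>

definition lower_hemicontinuous_on :: "'p::metric_space set \<Rightarrow> ('p \<Rightarrow> 'v::metric_space set) \<Rightarrow> bool" where
  "lower_hemicontinuous_on K \<Phi> \<longleftrightarrow>
     (\<forall>p\<in>K. \<forall>v\<in>\<Phi> p. \<forall>e>0. \<exists>d>0. \<forall>q\<in>K. dist q p < d \<longrightarrow> (\<exists>w\<in>\<Phi> q. dist w v < e))"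

lemma lower_hemicontinuous_on_Int_ball:
  fixes \<Phi> :: "'p::metric_space \<Rightarrow> 'v::real_normed_vector set"
  assumes lhc: "lower_hemicontinuous_on K \<Phi>" and cf: "continuous_on K f"
  shows "lower_hemicontinuous_on K (\<lambda>p. \<Phi> p \<inter> ball (f p) r)"
  unfolding lower_hemicontinuous_on_def
proof (intro ballI allI impI)
  fix p v e assume p: "p \<in> K" and v: "v \<in> \<Phi> p \<inter> ball (f p) r" and e: "(e::real) > 0"
  define e' where "e' = min e ((r - dist (f p) v)/2)"
  have e': "e' > 0" using v e by (auto simp: e'_def)
  obtain d1 where d1: "d1 > 0" "\<forall>q\<in>K. dist q p < d1 \<longrightarrow> (\<exists>w\<in>\<Phi> q. dist w v < e')"
    using lhc p v e' unfolding lower_hemicontinuous_on_def by blast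
  obtain d2 where d2: "d2 > 0" "\<forall>q\<in>K. dist q p < d2 \<longrightarrow> dist (f q) (f p) < e'"
    using cf p e' unfolding continuous_on_iff by blast
  show "\<exists>d>0. \<forall>q\<in>K. dist q p < d \<longrightarrow> (\<exists>w\<in>\<Phi> q \<inter> ball (f q) r. dist w v < e)"
  proof (intro exI[of _ "min d1 d2"] conjI ballI impI)
    show "min d1 d2 > 0" using d1 d2 by simp
    fix q assume q: "q \<in> K" "dist q p < min d1 d2"
    then obtain w where w: "w \<in> \<Phi> q" "dist w v < e'" using d1 by auto
    have "dist (f q) (f p) < e'" using d2 q by auto
    moreover have "2 * e' \<le> r - dist (f p) v"
    proof -
      have "e' \<le> (r - dist (f p) v)/2" unfolding e'_def by (rule min.cobounded2)
      then show ?thesis by simp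
    qed
    ultimately have "dist (f q) w < r"
      using w dist_triangle[of "f q" w "f p"] dist_triangle[of "f p" w v] dist_commute[of v w]
      by linarith
    then show "\<exists>w\<in>\<Phi> q \<inter> ball (f q) r. dist w v < e" using w e'_def by (intro bexI[of _ w]) auto
  qed
qed

lemma dist_convex_combinations_le:
  fixes V W :: "'p \<Rightarrow> 'v::real_normed_vector"
  assumes "finite F" and c: "\<And>p. p \<in> F \<Longrightarrow> 0 \<le> c p" "sum c F = 1"
    and close: "\<And>p. p \<in> F \<Longrightarrow> c p \<noteq> 0 \<Longrightarrow> dist (V p) (W p) \<le> r"
  shows "dist (\<Sum>p\<in>F. c p *\<^sub>R V p) (\<Sum>p\<in>F. c p *\<^sub>R W p) \<le> r"
proof -
  have "dist (\<Sum>p\<in>F. c p *\<^sub>R V p) (\<Sum>p\<in>F. c p *\<^sub>R W p) \<le> (\<Sum>p\<in>F. norm (c p *\<^sub>R (V p - W p)))"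
    unfolding dist_norm sum_subtractf[symmetric] scaleR_diff_right[symmetric] by (rule norm_sum)
  also have "\<dots> \<le> (\<Sum>p\<in>F. c p * r)"
  proof (rule sum_mono)
    fix p assume p: "p \<in> F"
    have "norm (c p *\<^sub>R (V p - W p)) = c p * dist (V p) (W p)" using c(1)[OF p] by (simp add: dist_norm)
    also have "\<dots> \<le> c p * r" using c(1)[OF p] close[OF p] by (cases "c p = 0") (auto intro: mult_left_mono)
    finally show "norm (c p *\<^sub>R (V p - W p)) \<le> c p * r" .
  qed
  also have "\<dots> = sum c F * r" by (rule sum_distrib_right[symmetric])
  finally show ?thesis using c(2) by simp
qed

text \<open>The first step of Michael's selection theorem: values chosen at the centres of a finite
  subcover are glued by a partition of unity; convexity of \<open>\<Phi> q\<close> keeps the glued value near \<open>\<Phi> q\<close>.\<close>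
lemma approximate_continuous_selection:
  fixes \<Phi> :: "'p::metric_space \<Rightarrow> 'v::real_normed_vector set"
  assumes K: "compact K" and ne: "\<And>p. p \<in> K \<Longrightarrow> \<Phi> p \<noteq> {}" and cv: "\<And>p. p \<in> K \<Longrightarrow> convex (\<Phi> p)"
    and lhc: "lower_hemicontinuous_on K \<Phi>" and \<eta>: "\<eta> > 0"
  obtains f where "continuous_on K f" "\<And>p. p \<in> K \<Longrightarrow> \<exists>w\<in>\<Phi> p. dist (f p) w < \<eta>"
proof -
  have "\<exists>v d. v \<in> \<Phi> p \<and> d > 0 \<and> (\<forall>q\<in>K. dist q p < d \<longrightarrow> (\<exists>w\<in>\<Phi> q. dist w v < \<eta>/2))"
    if p: "p \<in> K" for p
  proof -
    obtain v where "v \<in> \<Phi> p" using ne[OF p] by blast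
    moreover have "\<eta>/2 > 0" using \<eta> by simp
    ultimately show ?thesis using lhc p unfolding lower_hemicontinuous_on_def by blast
  qed
  then obtain V D where VD_choice: "\<forall>p\<in>K. V p \<in> \<Phi> p \<and> D p > 0 \<and>
      (\<forall>q\<in>K. dist q p < D p \<longrightarrow> (\<exists>w\<in>\<Phi> q. dist w (V p) < \<eta>/2))"
    by metis
  then have D: "\<And>p. p \<in> K \<Longrightarrow> D p > 0"
    and VD: "\<And>p q. p \<in> K \<Longrightarrow> q \<in> K \<Longrightarrow> dist q p < D p \<Longrightarrow> \<exists>w\<in>\<Phi> q. dist w (V p) < \<eta>/2"
    by blast+
  have cover: "K \<subseteq> (\<Union>p\<in>K. ball p (D p))" using D by force
  obtain F where F: "F \<subseteq> K" "finite F" "K \<subseteq> (\<Union>p\<in>F. ball p (D p))"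
    by (rule compactE_image[OF K _ cover]) auto
  define ph where "ph p q = max 0 (D p - dist q p)" for p q
  define S where "S q = (\<Sum>p\<in>F. ph p q)" for q
  have ph_nonneg: "ph p q \<ge> 0" for p q by (simp add: ph_def)
  have S_pos: "S q > 0" if q: "q \<in> K" for q
  proof -
    obtain p where "p \<in> F" "dist q p < D p" using F(3) q by (force simp: dist_commute)
    then have "ph p q > 0" by (simp add: ph_def)
    then show ?thesis unfolding S_def using F(2) \<open>p \<in> F\<close> ph_nonneg by (metis sum_pos2)
  qed
  define f where "f q = (\<Sum>p\<in>F. (ph p q / S q) *\<^sub>R V p)" for q
  have "continuous_on K f"
    unfolding f_def S_def ph_def
    by (intro continuous_intros) (use S_pos in \<open>force simp: S_def ph_def\<close>)
  moreover have "\<exists>w\<in>\<Phi> q. dist (f q) w < \<eta>" if q: "q \<in> K" for q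
  proof -
    have "\<forall>p\<in>F. \<exists>w. w \<in> \<Phi> q \<and> (dist q p < D p \<longrightarrow> dist w (V p) < \<eta>/2)"
      using VD F(1) ne q by blast
    then obtain W where W_choice: "\<forall>p\<in>F. W p \<in> \<Phi> q \<and> (dist q p < D p \<longrightarrow> dist (W p) (V p) < \<eta>/2)"
      by metis
    then have W: "\<And>p. p \<in> F \<Longrightarrow> W p \<in> \<Phi> q"
      and W_close: "\<And>p. p \<in> F \<Longrightarrow> dist q p < D p \<Longrightarrow> dist (W p) (V p) < \<eta>/2"
      by blast+
    define w where "w = (\<Sum>p\<in>F. (ph p q / S q) *\<^sub>R W p)"
    have weights: "(\<Sum>p\<in>F. ph p q / S q) = 1"
      using S_pos[OF q] by (simp add: S_def sum_divide_distrib[symmetric])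
    have "w \<in> \<Phi> q" unfolding w_def
      by (rule convex_sum[OF F(2)]) (use cv q weights W ph_nonneg S_pos[OF q] in auto)
    have "dist (V p) (W p) \<le> \<eta>/2" if "p \<in> F" "ph p q / S q \<noteq> 0" for p
    proof -
      have "dist q p < D p" using that(2) by (auto simp: ph_def max_def split: if_splits)
      then show ?thesis using W_close[OF that(1)] by (simp add: dist_commute)
    qed
    then have "dist (f q) w \<le> \<eta>/2" unfolding f_def w_def
      using ph_nonneg S_pos[OF q] weights by (intro dist_convex_combinations_le[OF F(2)]) auto
    then show ?thesis using \<open>w \<in> \<Phi> q\<close> \<eta> by (intro bexI[of _ w]) auto
  qed
  ultimately show ?thesis using that by blast
qed

lemma approximate_selections_converging:
  fixes \<Phi> :: "'p::metric_space \<Rightarrow> 'v::real_normed_vector set"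
  assumes K: "compact K" and ne: "\<And>p. p \<in> K \<Longrightarrow> \<Phi> p \<noteq> {}" and cv: "\<And>p. p \<in> K \<Longrightarrow> convex (\<Phi> p)"
    and lhc: "lower_hemicontinuous_on K \<Phi>"
  obtains F where "\<And>n. continuous_on K (F n)"
    "\<And>n p. p \<in> K \<Longrightarrow> \<exists>w\<in>\<Phi> p. dist (F n p) w < (1/2)^n"
    "\<And>n p. p \<in> K \<Longrightarrow> dist (F n p) (F (Suc n) p) < 2 * (1/2)^n"
proof -
  define P where "P n f \<longleftrightarrow> continuous_on K f \<and> (\<forall>p\<in>K. \<exists>w\<in>\<Phi> p. dist (f p) w < (1/2::real)^n)"
    for n f
  have "\<exists>g. P (Suc n) g \<and> (\<forall>p\<in>K. dist (f p) (g p) < 2 * (1/2)^n)" if f: "P n f" for n f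
  proof -
    let ?\<Psi> = "\<lambda>p. \<Phi> p \<inter> ball (f p) ((1/2)^n)"
    have \<Psi>_ne: "?\<Psi> p \<noteq> {}" if "p \<in> K" for p
      using f that unfolding P_def by (fastforce simp: dist_commute)
    have \<Psi>_convex: "convex (?\<Psi> p)" if "p \<in> K" for p using cv that by (simp add: convex_Int)
    have \<Psi>_lhc: "lower_hemicontinuous_on K ?\<Psi>"
      using lower_hemicontinuous_on_Int_ball[OF lhc] f unfolding P_def by blast
    have "(1/2::real)^Suc n > 0" by simp
    then obtain g where g: "continuous_on K g" "\<And>p. p \<in> K \<Longrightarrow> \<exists>w\<in>?\<Psi> p. dist (g p) w < (1/2)^Suc n"
      using approximate_continuous_selection[OF K \<Psi>_ne \<Psi>_convex \<Psi>_lhc] by blast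
    have "dist (f p) (g p) < 2 * (1/2)^n" if p: "p \<in> K" for p
    proof -
      obtain w where w: "w \<in> ?\<Psi> p" "dist (g p) w < (1/2)^Suc n" using g p by blast
      have "dist (f p) (g p) \<le> dist (f p) w + dist (g p) w" by (rule dist_triangle2)
      also have "\<dots> < (1/2)^n + (1/2)^Suc n" using w by (intro add_strict_mono) auto
      also have "\<dots> \<le> 2 * (1/2)^n" by simp
      finally show ?thesis .
    qed
    then show ?thesis using g unfolding P_def by blast
  qed
  moreover have "\<exists>f. P 0 f"
  proof -
    obtain f where "continuous_on K f" "\<And>p. p \<in> K \<Longrightarrow> \<exists>w\<in>\<Phi> p. dist (f p) w < 1"
      using approximate_continuous_selection[OF K ne cv lhc, of 1] by auto
    then show ?thesis unfolding P_def by auto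
  qed
  ultimately obtain F where "\<And>n. P n (F n)" "\<And>n. \<forall>p\<in>K. dist (F n p) (F (Suc n) p) < 2 * (1/2)^n"
    using dependent_nat_choice[of P "\<lambda>n f g. \<forall>p\<in>K. dist (f p) (g p) < 2 * (1/2)^n"] by metis
  then show ?thesis using that unfolding P_def by blast
qed

lemma michael_selection:
  fixes \<Phi> :: "'p::metric_space \<Rightarrow> 'v::banach set"
  assumes K: "compact K" and ne: "\<And>p. p \<in> K \<Longrightarrow> \<Phi> p \<noteq> {}" and cv: "\<And>p. p \<in> K \<Longrightarrow> convex (\<Phi> p)"
    and lhc: "lower_hemicontinuous_on K \<Phi>"
  obtains f where "continuous_on K f" "\<And>p. p \<in> K \<Longrightarrow> f p \<in> closure (\<Phi> p)"
proof -
  obtain F where F_cont: "\<And>n. continuous_on K (F n)"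
    and F_near: "\<And>n p. p \<in> K \<Longrightarrow> \<exists>w\<in>\<Phi> p. dist (F n p) w < (1/2)^n"
    and F_step: "\<And>n p. p \<in> K \<Longrightarrow> dist (F n p) (F (Suc n) p) < 2 * (1/2)^n"
    using approximate_selections_converging[OF assms] by metis
  define D where "D i p = F (Suc i) p - F i p" for i p
  have F_eq: "F n p = F 0 p + (\<Sum>i<n. D i p)" for n p
    unfolding D_def by (subst sum_lessThan_telescope) simp
  have D_le: "norm (D i p) \<le> 2 * (1/2)^i" if "p \<in> K" for i p
    using F_step[OF that, of i] by (simp add: D_def dist_norm norm_minus_commute)
  have summable: "summable (\<lambda>i. 2 * (1/2::real)^i)"
    by (intro summable_mult summable_geometric) simp
  have "uniform_limit K (\<lambda>n p. \<Sum>i<n. D i p) (\<lambda>p. \<Sum>i. D i p) sequentially"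
    by (rule Weierstrass_m_test[OF D_le summable])
  moreover have "continuous_on K (\<lambda>p. \<Sum>i<n. D i p)" for n
    unfolding D_def by (intro continuous_intros F_cont)
  ultimately have "continuous_on K (\<lambda>p. \<Sum>i. D i p)"
    by (intro uniform_limit_theorem) auto
  define f where "f p = F 0 p + (\<Sum>i. D i p)" for p
  have "continuous_on K f" unfolding f_def by (intro continuous_intros F_cont) fact
  moreover have "f p \<in> closure (\<Phi> p)" if p: "p \<in> K" for p
  proof -
    have "summable (\<lambda>i. D i p)"
      by (rule summable_comparison_test[OF _ summable]) (use D_le p in auto)
    then have "(\<lambda>n. F 0 p + (\<Sum>i<n. D i p)) \<longlonglongrightarrow> f p"
      unfolding f_def by (intro tendsto_add tendsto_const summable_LIMSEQ)
    then have "(\<lambda>n. F n p) \<longlonglongrightarrow> f p" by (simp only: F_eq[symmetric])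
    then have "(\<lambda>n. infdist (F n p) (\<Phi> p)) \<longlonglongrightarrow> infdist (f p) (\<Phi> p)"
      by (rule tendsto_infdist)
    moreover have "(\<lambda>n. infdist (F n p) (\<Phi> p)) \<longlonglongrightarrow> 0"
    proof (rule tendsto_sandwich[of "\<lambda>_. 0" _ _ "\<lambda>n. (1/2::real)^n"])
      have "infdist (F n p) (\<Phi> p) \<le> (1/2)^n" for n
      proof -
        obtain w where "w \<in> \<Phi> p" "dist (F n p) w < (1/2)^n" using F_near[OF p] by blast
        then show ?thesis using infdist_le[of w "\<Phi> p" "F n p"] by linarith
      qed
      then show "\<forall>\<^sub>F n in sequentially. infdist (F n p) (\<Phi> p) \<le> (1/2)^n" by simp
    qed (auto intro!: LIMSEQ_power_zero simp: infdist_nonneg)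
    ultimately have "infdist (f p) (\<Phi> p) = 0" by (rule LIMSEQ_unique)
    then show ?thesis using in_closure_iff_infdist_zero ne p by blast
  qed
  ultimately show ?thesis using that by blast
qed

section \<open>Peano's existence theorem\<close>

lemma convergent_subseq_on_countable:
  fixes G :: "nat \<Rightarrow> 'b \<Rightarrow> 'a::metric_space"
  assumes Q: "countable Q" and C: "compact C" and G_in: "\<And>n q. q \<in> Q \<Longrightarrow> G n q \<in> C"
  obtains d where "strict_mono d" "\<And>q. q \<in> Q \<Longrightarrow> convergent (\<lambda>k. G (d k) q)"
proof (cases "Q = {}")
  case True
  then show ?thesis using that[of "\<lambda>k. k"] by (simp add: strict_mono_def)
next
  case False
  define qe where "qe = from_nat_into Q"
  have qe_in: "qe m \<in> Q" for m using from_nat_into[OF False] by (simp add: qe_def)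
  interpret S: subseqs "\<lambda>m s. convergent (\<lambda>k. G (s k) (qe m))"
  proof
    fix m and s :: "nat \<Rightarrow> nat"
    obtain l r where "strict_mono r" "((\<lambda>k. G (s k) (qe m)) \<circ> r) \<longlonglongrightarrow> l"
      using C[unfolded compact_def, rule_format, of "\<lambda>k. G (s k) (qe m)"] G_in qe_in by blast
    then show "\<exists>r'. strict_mono r' \<and> convergent (\<lambda>k. G ((s \<circ> r') k) (qe m))"
      by (auto simp: convergent_def o_def)
  qed
  show ?thesis
  proof (rule that)
    show "strict_mono S.diagseq" by (rule S.subseq_diagseq)
    fix q assume "q \<in> Q"
    then obtain m where "qe m = q" using Q unfolding qe_def by (metis from_nat_into_to_nat_on)
    have "convergent (\<lambda>k. G ((S.diagseq \<circ> (+) (Suc m)) k) (qe m))"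
      by (rule S.diagseq_holds) (auto simp: o_def intro: convergent_subseq_convergent[unfolded o_def])
    then have "convergent (\<lambda>k. G (S.diagseq (k + Suc m)) (qe m))" by (simp add: o_def add.commute)
    then show "convergent (\<lambda>k. G (S.diagseq k) q)"
      using convergent_ignore_initial_segment \<open>qe m = q\<close> by blast
  qed
qed

lemma pointwise_convergent_subseq:
  fixes G :: "nat \<Rightarrow> real \<Rightarrow> 'a::metric_space"
  assumes ab: "a < b" and C: "compact C" and G_in: "\<And>n t. t \<in> {a..b} \<Longrightarrow> G n t \<in> C"
    and equi: "\<And>e. e > 0 \<Longrightarrow> \<exists>\<delta>>0. \<exists>N. \<forall>n\<ge>N. \<forall>s\<in>{a..b}. \<forall>t\<in>{a..b}.
                  \<bar>t - s\<bar> < \<delta> \<longrightarrow> dist (G n t) (G n s) < e"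
  obtains d where "strict_mono d" "\<And>t. t \<in> {a..b} \<Longrightarrow> convergent (\<lambda>k. G (d k) t)"
proof -
  define Q where "Q = {q \<in> \<rat>. a \<le> q \<and> q \<le> b}"
  have Q_dense: "\<exists>q\<in>Q. \<bar>q - t\<bar> < e" if "t \<in> {a..b}" "e > 0" for t e
  proof -
    have "max a (t - e) < min b (t + e)" using that ab by auto
    then obtain r where "r \<in> \<rat>" "max a (t - e) < r" "r < min b (t + e)"
      using Rats_dense_in_real by blast
    then show ?thesis unfolding Q_def by (intro bexI[of _ r]) auto
  qed
  have "countable Q" unfolding Q_def by (rule countable_subset[OF _ countable_rat]) auto
  moreover have "\<And>n q. q \<in> Q \<Longrightarrow> G n q \<in> C" using G_in by (simp add: Q_def)
  ultimately obtain d where "strict_mono d" and convergent_at_Q: "\<And>q. q \<in> Q \<Longrightarrow> convergent (\<lambda>k. G (d k) q)"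
    using convergent_subseq_on_countable[OF _ C] by blast
  then have d_ge: "k \<le> d k" for k by (simp add: seq_suble)
  have cauchy: "Cauchy (\<lambda>k. G (d k) t)" if t: "t \<in> {a..b}" for t
  proof (rule metric_CauchyI)
    fix e :: real assume "e > 0"
    then have "e/3 > 0" by simp
    then obtain \<delta> N where \<delta>: "\<delta> > 0" and N: "\<forall>n\<ge>N. \<forall>s\<in>{a..b}. \<forall>t\<in>{a..b}.
        \<bar>t - s\<bar> < \<delta> \<longrightarrow> dist (G n t) (G n s) < e/3"
      using equi by blast
    obtain q where q: "q \<in> Q" "\<bar>q - t\<bar> < \<delta>" using Q_dense[OF t \<delta>] by blast
    have "Cauchy (\<lambda>k. G (d k) q)" using convergent_at_Q[OF q(1)] by (simp add: convergent_Cauchy)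
    then obtain N1 where N1: "\<And>k l. k \<ge> N1 \<Longrightarrow> l \<ge> N1 \<Longrightarrow> dist (G (d k) q) (G (d l) q) < e/3"
      using \<open>e > 0\<close> unfolding Cauchy_def by (meson divide_pos_pos zero_less_numeral)
    have near_q: "dist (G (d k) t) (G (d k) q) < e/3" if "k \<ge> N" for k
    proof -
      have "d k \<ge> N" using d_ge[of k] that by simp
      moreover have "q \<in> {a..b}" using q(1) by (simp add: Q_def)
      ultimately show ?thesis using N t q(2) by (auto simp: abs_minus_commute)
    qed
    show "\<exists>N. \<forall>k\<ge>N. \<forall>l\<ge>N. dist (G (d k) t) (G (d l) t) < e"
    proof (intro exI[of _ "max N1 N"] allI impI)
      fix k l assume "max N1 N \<le> k" "max N1 N \<le> l"
      then have "dist (G (d k) t) (G (d k) q) + dist (G (d k) q) (G (d l) q) + dist (G (d l) t) (G (d l) q) < e"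
        using near_q[of k] near_q[of l] N1[of k l] by simp
      moreover have "dist (G (d k) t) (G (d l) t)
          \<le> dist (G (d k) t) (G (d k) q) + dist (G (d k) q) (G (d l) q) + dist (G (d l) t) (G (d l) q)"
        using dist_triangle[of "G (d k) t" "G (d l) t" "G (d k) q"]
          dist_triangle[of "G (d k) q" "G (d l) t" "G (d l) q"] by (simp add: dist_commute)
      ultimately show "dist (G (d k) t) (G (d l) t) < e" by linarith
    qed
  qed
  have "complete C" using C by (rule compact_imp_complete)
  have "convergent (\<lambda>k. G (d k) t)" if t: "t \<in> {a..b}" for t
  proof -
    have "\<exists>l\<in>C. (\<lambda>k. G (d k) t) \<longlonglongrightarrow> l"
      using \<open>complete C\<close>[unfolded complete_def, rule_format, of "\<lambda>k. G (d k) t"] G_in[OF t] cauchy[OF t]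
      by blast
    then show ?thesis unfolding convergent_def by blast
  qed
  with \<open>strict_mono d\<close> show ?thesis using that by blast
qed

text \<open>A forward difference-quotient estimate that is uniform in the base point already gives the
  two-sided derivative, because the backward quotient at \<open>s\<close> is the forward one at \<open>t < s\<close>.\<close>
lemma has_vector_derivative_if_uniform_forward_estimate:
  fixes y F :: "real \<Rightarrow> 'a::real_normed_vector"
  assumes F: "continuous_on {a..b} F"
    and est: "\<And>\<eta>. \<eta> > 0 \<Longrightarrow> \<exists>\<delta>>0. \<forall>s\<in>{a..b}. \<forall>t\<in>{a..b}. s \<le> t \<longrightarrow> t - s < \<delta> \<longrightarrow>
                norm (y t - y s - (t - s) *\<^sub>R F s) \<le> \<eta> * (t - s)"
    and s: "s \<in> {a..b}"
  shows "(y has_vector_derivative F s) (at s within {a..b})"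
  unfolding has_vector_derivative_def has_derivative_within_alt
proof (intro conjI allI impI bounded_linear_scaleR_left)
  fix e :: real assume e: "e > 0"
  obtain \<delta>1 where \<delta>1: "\<delta>1 > 0" and forward: "\<And>s t. s \<in> {a..b} \<Longrightarrow> t \<in> {a..b} \<Longrightarrow> s \<le> t \<Longrightarrow>
      t - s < \<delta>1 \<Longrightarrow> norm (y t - y s - (t - s) *\<^sub>R F s) \<le> (e/2) * (t - s)"
    using est[of "e/2"] e by auto
  obtain \<delta>2 where \<delta>2: "\<delta>2 > 0" and F_near: "\<And>t. t \<in> {a..b} \<Longrightarrow> dist t s < \<delta>2 \<Longrightarrow> dist (F t) (F s) < e/2"
    using F s e unfolding continuous_on_iff by (meson half_gt_zero)
  show "\<exists>d>0. \<forall>t\<in>{a..b}. norm (t - s) < d \<longrightarrow> norm (y t - y s - (t - s) *\<^sub>R F s) \<le> e * norm (t - s)"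
  proof (intro exI[of _ "min \<delta>1 \<delta>2"] conjI ballI impI)
    show "min \<delta>1 \<delta>2 > 0" using \<delta>1 \<delta>2 by simp
    fix t assume t: "t \<in> {a..b}" and close: "norm (t - s) < min \<delta>1 \<delta>2"
    show "norm (y t - y s - (t - s) *\<^sub>R F s) \<le> e * norm (t - s)"
    proof (cases "s \<le> t")
      case True
      then have "norm (y t - y s - (t - s) *\<^sub>R F s) \<le> (e/2) * (t - s)"
        using forward[OF s t] close by auto
      also have "\<dots> \<le> e * norm (t - s)" using True e by simp
      finally show ?thesis .
    next
      case False
      have "y t - y s - (t - s) *\<^sub>R F s = - (y s - y t - (s - t) *\<^sub>R F t) + (s - t) *\<^sub>R (F s - F t)"
        by (simp add: algebra_simps)
      also have "norm \<dots> \<le> norm (y s - y t - (s - t) *\<^sub>R F t) + (s - t) * norm (F s - F t)"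
        using norm_triangle_ineq[of "- (y s - y t - (s - t) *\<^sub>R F t)" "(s - t) *\<^sub>R (F s - F t)"] False
        by (simp add: norm_minus_commute)
      also have "\<dots> \<le> (e/2) * (s - t) + (s - t) * (e/2)"
        using forward[OF t s] F_near[OF t] False close
        by (intro add_mono mult_left_mono) (auto simp: dist_norm norm_minus_commute)
      finally show ?thesis using False by simp
    qed
  qed
qed

lemma dist_Pair_le_add: "dist (a, b) (c, d) \<le> dist a c + dist b d"
  unfolding dist_Pair_Pair by (metis sqrt_sum_squares_le_sum_abs zero_le_dist abs_of_nonneg)

primrec euler_nodes :: "(real \<times> 'a \<Rightarrow> 'a) \<Rightarrow> real \<Rightarrow> 'a \<Rightarrow> real \<Rightarrow> nat \<Rightarrow> 'a::real_normed_vector" where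
  "euler_nodes f a x0 h 0 = x0"
| "euler_nodes f a x0 h (Suc j) = euler_nodes f a x0 h j + h *\<^sub>R f (a + real j * h, euler_nodes f a x0 h j)"

lemma euler_nodes_diff:
  assumes "i \<le> j"
  shows "euler_nodes f a x0 h j - euler_nodes f a x0 h i =
           (\<Sum>m\<in>{i..<j}. h *\<^sub>R f (a + real m * h, euler_nodes f a x0 h m))"
  using assms
proof (induction j)
  case (Suc j)
  then show ?case by (cases "i = Suc j") (auto simp: sum.atLeastLessThan_Suc algebra_simps)
qed simp

lemma norm_euler_nodes_diff_le:
  assumes "i \<le> j" "0 \<le> h"
    and bound: "\<And>m. i \<le> m \<Longrightarrow> m < j \<Longrightarrow> norm (f (a + real m * h, euler_nodes f a x0 h m)) \<le> M"
  shows "norm (euler_nodes f a x0 h j - euler_nodes f a x0 h i) \<le> (real j - real i) * h * M"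
proof -
  have "norm (euler_nodes f a x0 h j - euler_nodes f a x0 h i)
        \<le> (\<Sum>m\<in>{i..<j}. norm (h *\<^sub>R f (a + real m * h, euler_nodes f a x0 h m)))"
    unfolding euler_nodes_diff[OF assms(1)] by (rule norm_sum)
  also have "\<dots> \<le> (\<Sum>m\<in>{i..<j}. h * M)"
    using bound \<open>0 \<le> h\<close> by (intro sum_mono) (auto intro: mult_left_mono)
  also have "\<dots> = (real j - real i) * h * M" using \<open>i \<le> j\<close> by (simp add: of_nat_diff)
  finally show ?thesis .
qed

lemma euler_nodes_in_cball:
  assumes h: "0 \<le> h" and M: "0 \<le> M" "M * (b - a) \<le> R"
    and bound: "\<And>p. p \<in> {a..b} \<times> cball x0 R \<Longrightarrow> norm (f p) \<le> M"
    and j: "real j * h \<le> b - a"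
  shows "euler_nodes f a x0 h j \<in> cball x0 R"
proof -
  have "norm (euler_nodes f a x0 h j - x0) \<le> real j * h * M" using j
  proof (induction j)
    case (Suc j)
    have "real j * h \<le> b - a" using Suc.prems h by (simp add: distrib_right)
    note IH = Suc.IH[OF this]
    have "real j * h * M \<le> R" using \<open>real j * h \<le> b - a\<close> M by (metis mult.commute mult_left_mono order.trans)
    then have "euler_nodes f a x0 h j \<in> cball x0 R" using IH by (simp add: dist_norm norm_minus_commute)
    moreover have "a + real j * h \<in> {a..b}" using \<open>real j * h \<le> b - a\<close> h by simp
    ultimately have "norm (f (a + real j * h, euler_nodes f a x0 h j)) \<le> M" using bound by simp
    then have "norm (h *\<^sub>R f (a + real j * h, euler_nodes f a x0 h j)) \<le> h * M"
      using h by (simp add: mult_left_mono)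
    moreover have "euler_nodes f a x0 h (Suc j) - x0 =
        (euler_nodes f a x0 h j - x0) + h *\<^sub>R f (a + real j * h, euler_nodes f a x0 h j)"
      by simp
    ultimately have "norm (euler_nodes f a x0 h (Suc j) - x0)
        \<le> norm (euler_nodes f a x0 h j - x0) + norm (h *\<^sub>R f (a + real j * h, euler_nodes f a x0 h j))"
      by (metis norm_triangle_ineq)
    also have "\<dots> \<le> real j * h * M + h * M" using IH \<open>norm (h *\<^sub>R _) \<le> h * M\<close> by (rule add_mono)
    finally show ?case by (simp add: algebra_simps)
  qed simp
  moreover have "real j * h * M \<le> R" using j M by (metis mult.commute mult_left_mono order.trans)
  ultimately show ?thesis by (simp add: dist_norm norm_minus_commute)
qed

locale peano_rectangle =
  fixes f :: "real \<times> 'a::euclidean_space \<Rightarrow> 'a" and a b R M :: real and x0 :: 'a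
  assumes a_less_b: "a < b" and f_cont: "continuous_on ({a..b} \<times> cball x0 R) f"
    and norm_f_le: "\<And>p. p \<in> {a..b} \<times> cball x0 R \<Longrightarrow> norm (f p) \<le> M"
    and M_nonneg: "0 \<le> M" and time_bound: "M * (b - a) \<le> R"
begin

definition step :: "nat \<Rightarrow> real" where "step n = (b - a) / real (Suc n)"

definition index :: "nat \<Rightarrow> real \<Rightarrow> nat" where "index n t = nat \<lfloor>(t - a) / step n\<rfloor>"

definition grid :: "nat \<Rightarrow> real \<Rightarrow> real" where "grid n t = real (index n t) * step n"

text \<open>The Euler polygon, taken piecewise constant: its value at \<open>t\<close> is that of the last node before \<open>t\<close>.\<close>
definition path :: "nat \<Rightarrow> real \<Rightarrow> 'a" where "path n t = euler_nodes f a x0 (step n) (index n t)"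

lemma step_pos: "step n > 0"
  using a_less_b by (simp add: step_def)

lemma step_tendsto_zero: "step \<longlonglongrightarrow> 0"
  unfolding step_def by (rule LIMSEQ_Suc[OF lim_const_over_n])

lemma real_index: "t \<in> {a..b} \<Longrightarrow> real (index n t) = of_int \<lfloor>(t - a) / step n\<rfloor>"
  using step_pos[of n] by (simp add: index_def)

lemma grid_le: "t \<in> {a..b} \<Longrightarrow> grid n t \<le> t - a"
proof -
  assume t: "t \<in> {a..b}"
  have "real (index n t) \<le> (t - a) / step n" unfolding real_index[OF t] by (rule of_int_floor_le)
  then show ?thesis using step_pos[of n] by (simp add: grid_def pos_le_divide_eq)
qed

lemma grid_gt: "t \<in> {a..b} \<Longrightarrow> t - a < grid n t + step n"
proof -
  assume t: "t \<in> {a..b}"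
  have "(t - a) / step n < real (index n t) + 1"
    unfolding real_index[OF t] by (rule real_of_int_floor_add_one_gt)
  then show ?thesis using step_pos[of n] by (simp add: grid_def pos_divide_less_eq algebra_simps)
qed

lemma index_le: "t \<in> {a..b} \<Longrightarrow> index n t \<le> Suc n"
proof -
  assume t: "t \<in> {a..b}"
  have "real (index n t) * step n \<le> real (Suc n) * step n"
    using grid_le[OF t, of n] t by (simp add: grid_def step_def)
  then show ?thesis using step_pos[of n] by simp
qed

lemma index_mono: "s \<le> t \<Longrightarrow> index n s \<le> index n t"
  unfolding index_def using step_pos[of n] by (intro nat_mono floor_mono divide_right_mono) auto

lemma grid_tendsto: "t \<in> {a..b} \<Longrightarrow> (\<lambda>n. grid n t) \<longlonglongrightarrow> t - a"
proof -
  assume t: "t \<in> {a..b}"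
  have "norm (grid n t - (t - a)) \<le> step n" for n
    using grid_le[OF t, of n] grid_gt[OF t, of n] by simp
  then show ?thesis
    by (intro Lim_null_comparison[OF _ step_tendsto_zero, THEN LIM_zero_cancel] always_eventually) auto
qed

lemma node_in_rectangle:
  assumes "m \<le> n"
  shows "(a + real m * step n, euler_nodes f a x0 (step n) m) \<in> {a..b} \<times> cball x0 R"
proof -
  have "real m * step n \<le> real (Suc n) * step n" using assms step_pos[of n] by simp
  then have "real m * step n \<le> b - a" by (simp add: step_def)
  then show ?thesis
    using euler_nodes_in_cball[OF less_imp_le[OF step_pos] M_nonneg time_bound norm_f_le] step_pos[of n]
    by simp
qed

lemma path_in_cball: "t \<in> {a..b} \<Longrightarrow> path n t \<in> cball x0 R"
  unfolding path_def
  using euler_nodes_in_cball[OF less_imp_le[OF step_pos] M_nonneg time_bound norm_f_le] grid_le[of t n]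
  by (simp add: grid_def)

lemma path_a: "path n a = x0"
  by (simp add: path_def index_def)

lemma norm_path_diff_le:
  assumes "s \<in> {a..b}" "t \<in> {a..b}" "s \<le> t"
  shows "norm (path n t - path n s) \<le> M * (t - s + step n)"
proof -
  have "norm (path n t - path n s) \<le> (real (index n t) - real (index n s)) * step n * M"
    unfolding path_def
  proof (rule norm_euler_nodes_diff_le[OF index_mono[OF assms(3)] less_imp_le[OF step_pos]])
    fix m assume "m < index n t"
    then have "m \<le> n" using index_le[OF assms(2), of n] by simp
    then show "norm (f (a + real m * step n, euler_nodes f a x0 (step n) m)) \<le> M"
      using norm_f_le node_in_rectangle by blast
  qed
  also have "\<dots> \<le> (t - s + step n) * M"
    using grid_le[OF assms(2), of n] grid_gt[OF assms(1), of n] M_nonneg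
    by (intro mult_right_mono) (auto simp: grid_def left_diff_distrib)
  finally show ?thesis by (simp add: mult.commute)
qed

lemma path_asymptotically_equicontinuous:
  assumes "e > 0"
  shows "\<exists>\<delta>>0. \<exists>N. \<forall>n\<ge>N. \<forall>s\<in>{a..b}. \<forall>t\<in>{a..b}. \<bar>t - s\<bar> < \<delta> \<longrightarrow> dist (path n t) (path n s) < e"
proof -
  define \<delta> where "\<delta> = e / (2 * (M + 1))"
  have \<delta>: "\<delta> > 0" "M * \<delta> < e/2" using assms M_nonneg by (auto simp: \<delta>_def field_simps)
  have "\<forall>\<^sub>F n in sequentially. step n < \<delta>" using step_tendsto_zero \<delta>(1) by (rule order_tendstoD)
  then obtain N where N: "\<And>n. n \<ge> N \<Longrightarrow> step n < \<delta>" unfolding eventually_sequentially by blast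
  have "dist (path n t) (path n s) < e"
    if "n \<ge> N" "s \<in> {a..b}" "t \<in> {a..b}" "\<bar>t - s\<bar> < \<delta>" for n s t
  proof -
    have "dist (path n t) (path n s) \<le> M * (\<bar>t - s\<bar> + step n)"
      using norm_path_diff_le[of s t n] norm_path_diff_le[of t s n] that
      by (cases "s \<le> t") (auto simp: dist_norm norm_minus_commute)
    also have "\<dots> \<le> M * (\<delta> + \<delta>)" using that N[of n] M_nonneg by (intro mult_left_mono) auto
    also have "\<dots> < e" using \<delta>(2) by (simp add: algebra_simps)
    finally show ?thesis .
  qed
  then show ?thesis using \<delta>(1) by blast
qed

text \<open>Between two times the polygon moves by a sum of Euler increments whose directions are values
  of \<open>f\<close> at nodes within distance \<open>r\<close> of \<open>(s, z)\<close>.\<close>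
lemma path_increment:
  assumes s: "s \<in> {a..b}" and t: "t \<in> {a..b}" and st: "s \<le> t"
    and r: "(1 + M) * (t - s + step n) + dist (path n s) z \<le> r"
    and close: "\<And>p. p \<in> {a..b} \<times> cball x0 R \<Longrightarrow> dist p (s, z) \<le> r \<Longrightarrow> dist (f p) (f (s, z)) \<le> \<eta>"
  shows "norm (path n t - path n s - (grid n t - grid n s) *\<^sub>R f (s, z)) \<le> \<eta> * (grid n t - grid n s)"
proof -
  define h i j where "h = step n" and "i = index n s" and "j = index n t"
  define Y where "Y = euler_nodes f a x0 h"
  have h: "h > 0" unfolding h_def by (rule step_pos)
  have ij: "i \<le> j" "j \<le> Suc n" unfolding i_def j_def using index_mono[OF st] index_le[OF t] by auto
  have i_bounds: "real i * h \<le> s - a" "s - a < real i * h + h"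
    using grid_le[OF s] grid_gt[OF s] unfolding grid_def h_def i_def by auto
  have j_bounds: "real j * h \<le> t - a"
    using grid_le[OF t] unfolding grid_def h_def j_def by auto
  have grid_diff: "grid n t - grid n s = (real j - real i) * h"
    unfolding grid_def h_def i_def j_def by (simp add: algebra_simps)
  have node_close: "dist (f (a + real m * h, Y m)) (f (s, z)) \<le> \<eta>" if m: "m \<in> {i..<j}" for m
  proof -
    have m_bounds: "real i * h \<le> real m * h" "real m * h \<le> real j * h" using m h by auto
    have "a + real m * h - s \<le> t - s + h" "s - (a + real m * h) \<le> t - s + h"
      using m_bounds i_bounds j_bounds st h by linarith+
    then have "dist (a + real m * h) s \<le> t - s + h" by (simp add: dist_real_def abs_le_iff)
    moreover have "dist (Y m) z \<le> M * (t - s + h) + dist (path n s) z"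
    proof -
      have "norm (Y m - Y i) \<le> (real m - real i) * h * M"
        unfolding Y_def
        by (rule norm_euler_nodes_diff_le) (use m ij h norm_f_le node_in_rectangle[of _ n] in \<open>auto simp: h_def\<close>)
      also have "\<dots> \<le> (t - s + h) * M"
      proof (rule mult_right_mono[OF _ M_nonneg])
        show "(real m - real i) * h \<le> t - s + h"
          unfolding left_diff_distrib using m_bounds i_bounds j_bounds by linarith
      qed
      finally show ?thesis
        using dist_triangle[of "Y m" z "Y i"] by (simp add: Y_def path_def h_def i_def dist_norm mult.commute)
    qed
    ultimately have "dist (a + real m * h, Y m) (s, z) \<le> r"
      using dist_Pair_le_add[of "a + real m * h" "Y m" s z] r by (simp add: h_def algebra_simps)
    moreover have "m \<le> n" using m ij by auto
    ultimately show ?thesis using close node_in_rectangle unfolding Y_def h_def by blast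
  qed
  have "path n t - path n s - (grid n t - grid n s) *\<^sub>R f (s, z) = (\<Sum>m\<in>{i..<j}. h *\<^sub>R (f (a + real m * h, Y m) - f (s, z)))"
    using euler_nodes_diff[OF ij(1), of f a x0 h] ij(1)
    by (simp add: path_def Y_def h_def i_def j_def grid_diff scaleR_diff_right sum_subtractf
        sum_constant_scaleR of_nat_diff)
  also have "norm \<dots> \<le> (\<Sum>m\<in>{i..<j}. h * \<eta>)"
    using node_close h by (intro order.trans[OF norm_sum] sum_mono) (auto simp: dist_norm intro: mult_left_mono)
  also have "\<dots> = \<eta> * (grid n t - grid n s)" using ij by (simp add: grid_diff of_nat_diff)
  finally show ?thesis .
qed

context
  fixes d :: "nat \<Rightarrow> nat" and y :: "real \<Rightarrow> 'a"
  assumes d: "strict_mono d" and y_lim: "\<And>t. t \<in> {a..b} \<Longrightarrow> (\<lambda>k. path (d k) t) \<longlonglongrightarrow> y t"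
begin

lemma step_subseq_tendsto_zero: "(\<lambda>k. step (d k)) \<longlonglongrightarrow> 0"
  using LIMSEQ_subseq_LIMSEQ[OF step_tendsto_zero d] by (simp add: o_def)

lemma limit_in_cball: "t \<in> {a..b} \<Longrightarrow> y t \<in> cball x0 R"
  by (rule Lim_in_closed_set[OF closed_cball _ _ y_lim]) (use path_in_cball in auto)

lemma limit_lipschitz: "M-lipschitz_on {a..b} y"
proof (rule lipschitz_onI[OF _ M_nonneg])
  have forward: "norm (y t - y s) \<le> M * (t - s)" if "s \<in> {a..b}" "t \<in> {a..b}" "s \<le> t" for s t
  proof (rule tendsto_le[OF trivial_limit_sequentially])
    show "(\<lambda>k. M * (t - s + step (d k))) \<longlonglongrightarrow> M * (t - s)"
      using step_subseq_tendsto_zero by (auto intro!: tendsto_eq_intros)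
    show "(\<lambda>k. norm (path (d k) t - path (d k) s)) \<longlonglongrightarrow> norm (y t - y s)"
      using y_lim that by (intro tendsto_intros)
  qed (use norm_path_diff_le that in simp)
  then show "dist (y s) (y t) \<le> M * dist s t" if "s \<in> {a..b}" "t \<in> {a..b}" for s t
    using forward[of s t] forward[of t s] that
    by (cases "s \<le> t") (auto simp: dist_norm dist_real_def norm_minus_commute)
qed

lemma limit_forward_estimate:
  assumes \<eta>: "\<eta> > 0"
  shows "\<exists>\<delta>>0. \<forall>s\<in>{a..b}. \<forall>t\<in>{a..b}. s \<le> t \<longrightarrow> t - s < \<delta> \<longrightarrow>
    norm (y t - y s - (t - s) *\<^sub>R f (s, y s)) \<le> \<eta> * (t - s)"
proof -
  have "compact ({a..b} \<times> cball x0 R)" by (intro compact_Times compact_Icc compact_cball)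
  then obtain \<delta>0 where \<delta>0: "\<delta>0 > 0" and unif: "\<And>p p'. p \<in> {a..b} \<times> cball x0 R \<Longrightarrow>
      p' \<in> {a..b} \<times> cball x0 R \<Longrightarrow> dist p' p < \<delta>0 \<Longrightarrow> dist (f p') (f p) < \<eta>"
    using compact_uniformly_continuous[OF f_cont] \<eta> unfolding uniformly_continuous_on_def by metis
  define \<delta> where "\<delta> = \<delta>0 / (2 * (1 + M))"
  have "\<delta> > 0" using \<delta>0 M_nonneg by (simp add: \<delta>_def)
  moreover have "norm (y t - y s - (t - s) *\<^sub>R f (s, y s)) \<le> \<eta> * (t - s)"
    if s: "s \<in> {a..b}" and t: "t \<in> {a..b}" and st: "s \<le> t" and "t - s < \<delta>" for s t
  proof (rule tendsto_le[OF trivial_limit_sequentially])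
    have small: "(1 + M) * (t - s) < \<delta>0 / 2"
      using \<open>t - s < \<delta>\<close> M_nonneg by (simp add: \<delta>_def field_simps)
    have "(\<lambda>k. (1 + M) * step (d k) + dist (path (d k) s) (y s)) \<longlonglongrightarrow> (1 + M) * 0 + dist (y s) (y s)"
      using step_subseq_tendsto_zero y_lim[OF s] by (intro tendsto_intros)
    then have "\<forall>\<^sub>F k in sequentially. (1 + M) * step (d k) + dist (path (d k) s) (y s) < \<delta>0 / 2"
      using \<delta>0 by (intro order_tendstoD) auto
    then show "\<forall>\<^sub>F k in sequentially. norm (path (d k) t - path (d k) s - (grid (d k) t - grid (d k) s) *\<^sub>R f (s, y s))
        \<le> \<eta> * (grid (d k) t - grid (d k) s)"
    proof eventually_elim
      case (elim k)
      show ?case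
      proof (rule path_increment[OF s t st order_refl])
        fix p assume "p \<in> {a..b} \<times> cball x0 R"
          "dist p (s, y s) \<le> (1 + M) * (t - s + step (d k)) + dist (path (d k) s) (y s)"
        then have "dist p (s, y s) < \<delta>0" using elim small by (simp add: algebra_simps)
        then show "dist (f p) (f (s, y s)) \<le> \<eta>"
          using unif[of "(s, y s)" p] s limit_in_cball[OF s] \<open>p \<in> _\<close> by fastforce
      qed
    qed
    have "(\<lambda>k. grid (d k) t) \<longlonglongrightarrow> t - a" "(\<lambda>k. grid (d k) s) \<longlonglongrightarrow> s - a"
      using LIMSEQ_subseq_LIMSEQ[OF grid_tendsto d] s t by (auto simp: o_def)
    then have "(\<lambda>k. grid (d k) t - grid (d k) s) \<longlonglongrightarrow> (t - a) - (s - a)" by (rule tendsto_diff)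
    then have grid_diff: "(\<lambda>k. grid (d k) t - grid (d k) s) \<longlonglongrightarrow> t - s" by simp
    show "(\<lambda>k. \<eta> * (grid (d k) t - grid (d k) s)) \<longlonglongrightarrow> \<eta> * (t - s)"
      using grid_diff by (rule tendsto_mult_left)
    have "(\<lambda>k. path (d k) t - path (d k) s - (grid (d k) t - grid (d k) s) *\<^sub>R f (s, y s))
        \<longlonglongrightarrow> y t - y s - (t - s) *\<^sub>R f (s, y s)"
      by (intro tendsto_diff tendsto_scaleR[OF grid_diff] tendsto_const y_lim s t)
    then show "(\<lambda>k. norm (path (d k) t - path (d k) s - (grid (d k) t - grid (d k) s) *\<^sub>R f (s, y s)))
        \<longlonglongrightarrow> norm (y t - y s - (t - s) *\<^sub>R f (s, y s))"
      by (rule tendsto_norm)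
  qed
  ultimately show ?thesis by blast
qed

end

lemma exists_solution:
  obtains y where "y a = x0" "\<And>t. t \<in> {a..b} \<Longrightarrow> y t \<in> cball x0 R"
    "\<And>t. t \<in> {a..b} \<Longrightarrow> (y has_vector_derivative f (t, y t)) (at t within {a..b})"
proof -
  obtain d where d: "strict_mono d" and conv: "\<And>t. t \<in> {a..b} \<Longrightarrow> convergent (\<lambda>k. path (d k) t)"
    using pointwise_convergent_subseq[OF a_less_b compact_cball path_in_cball path_asymptotically_equicontinuous]
    by blast
  define y where "y t = lim (\<lambda>k. path (d k) t)" for t
  have y_lim: "(\<lambda>k. path (d k) t) \<longlonglongrightarrow> y t" if "t \<in> {a..b}" for t
    using conv[OF that] unfolding y_def by (simp add: convergent_LIMSEQ_iff)
  have "y a = x0" using y_lim[of a] a_less_b by (simp add: path_a LIMSEQ_const_iff)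
  have "continuous_on {a..b} (\<lambda>t. f (t, y t))"
    by (rule continuous_on_compose2[OF f_cont])
      (use limit_in_cball[OF d y_lim] lipschitz_on_continuous_on[OF limit_lipschitz[OF d y_lim]] in
        \<open>auto intro!: continuous_intros\<close>)
  then have "(y has_vector_derivative f (t, y t)) (at t within {a..b})" if "t \<in> {a..b}" for t
    using has_vector_derivative_if_uniform_forward_estimate limit_forward_estimate[OF d y_lim] that by blast
  with \<open>y a = x0\<close> limit_in_cball[OF d y_lim] show ?thesis using that by blast
qed

end

lemma peano_existence:
  fixes f :: "real \<times> 'a::euclidean_space \<Rightarrow> 'a"
  assumes "a < b" "continuous_on ({a..b} \<times> cball x0 R) f"
    "\<And>p. p \<in> {a..b} \<times> cball x0 R \<Longrightarrow> norm (f p) \<le> M" "0 \<le> M" "M * (b - a) \<le> R"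
  obtains y where "y a = x0" "\<And>t. t \<in> {a..b} \<Longrightarrow> y t \<in> cball x0 R"
    "\<And>t. t \<in> {a..b} \<Longrightarrow> (y has_vector_derivative f (t, y t)) (at t within {a..b})"
  using peano_rectangle.exists_solution[OF peano_rectangle.intro[OF assms]] by blast

lemma peano_existence_backward:
  fixes f :: "real \<times> 'a::euclidean_space \<Rightarrow> 'a"
  assumes ab: "a < b" and cont: "continuous_on ({a..b} \<times> cball x0 R) f"
    and bound: "\<And>p. p \<in> {a..b} \<times> cball x0 R \<Longrightarrow> norm (f p) \<le> M" and M: "0 \<le> M" "M * (b - a) \<le> R"
  obtains y where "y b = x0" "\<And>t. t \<in> {a..b} \<Longrightarrow> y t \<in> cball x0 R"
    "\<And>t. t \<in> {a..b} \<Longrightarrow> (y has_vector_derivative f (t, y t)) (at t within {a..b})"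
proof -
  define reflect where "reflect t = a + b - t" for t :: real
  have reflect_Icc: "reflect ` {a..b} = {a..b}"
    by (auto simp: reflect_def image_iff intro!: bexI[of _ "a + b - _"])
  define g where "g p = - f (reflect (fst p), snd p)" for p
  have maps: "(\<lambda>p. (reflect (fst p), snd p)) ` ({a..b} \<times> cball x0 R) \<subseteq> {a..b} \<times> cball x0 R"
    by (auto simp: reflect_def)
  have "continuous_on ({a..b} \<times> cball x0 R) g"
    unfolding g_def reflect_def by (intro continuous_intros continuous_on_compose2[OF cont _ maps[unfolded reflect_def]])
  moreover have "\<And>p. p \<in> {a..b} \<times> cball x0 R \<Longrightarrow> norm (g p) \<le> M"
    using bound by (auto simp: g_def reflect_def)
  ultimately obtain z where z: "z a = x0" "\<And>t. t \<in> {a..b} \<Longrightarrow> z t \<in> cball x0 R"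
    "\<And>t. t \<in> {a..b} \<Longrightarrow> (z has_vector_derivative g (t, z t)) (at t within {a..b})"
    using peano_existence[OF ab _ _ M] by blast
  show ?thesis
  proof
    show "(z \<circ> reflect) b = x0" using z(1) by (simp add: reflect_def)
    fix t assume t: "t \<in> {a..b}"
    then have "reflect t \<in> {a..b}" by (auto simp: reflect_def)
    then show "(z \<circ> reflect) t \<in> cball x0 R" using z(2) by simp
    have "(reflect has_vector_derivative -1) (at t within {a..b})"
      unfolding reflect_def by (auto intro!: derivative_eq_intros)
    moreover have "(z has_vector_derivative g (reflect t, z (reflect t))) (at (reflect t) within reflect ` {a..b})"
      using z(3)[OF \<open>reflect t \<in> {a..b}\<close>] unfolding reflect_Icc .
    ultimately have "((z \<circ> reflect) has_vector_derivative (-1) *\<^sub>R g (reflect t, z (reflect t))) (at t within {a..b})"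
      by (rule vector_diff_chain_within)
    then show "((z \<circ> reflect) has_vector_derivative f (t, (z \<circ> reflect) t)) (at t within {a..b})"
      by (simp add: g_def reflect_def)
  qed
qed

section \<open>Integrals of extended-real functions\<close>

text \<open>The running cost \<open>L t (y t) (y' t)\<close> along an arc is not known to be measurable, so the
  additivity properties of the integral used below are proved without measurability of the integrand.\<close>

lemma nn_integral_superadditive:
  fixes u v :: "'a \<Rightarrow> ennreal"
  shows "integral\<^sup>N M u + integral\<^sup>N M v \<le> integral\<^sup>N M (\<lambda>x. u x + v x)"
proof -
  let ?G = "\<lambda>w. {g. simple_function M g \<and> g \<le> w}"
  have ne: "?G w \<noteq> {}" for w :: "'a \<Rightarrow> ennreal"
  proof -
    have "(\<lambda>_. 0) \<in> ?G w" by (auto simp: le_fun_def)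
    then show ?thesis by blast
  qed
  have "integral\<^sup>N M u + integral\<^sup>N M v = (SUP g1\<in>?G u. integral\<^sup>S M g1) + (SUP g2\<in>?G v. integral\<^sup>S M g2)"
    unfolding nn_integral_def ..
  also have "\<dots> = (SUP g1\<in>?G u. integral\<^sup>S M g1 + (SUP g2\<in>?G v. integral\<^sup>S M g2))"
    by (rule ennreal_SUP_add_left[OF ne, symmetric])
  also have "\<dots> \<le> integral\<^sup>N M (\<lambda>x. u x + v x)"
  proof (rule SUP_least)
    fix g1 assume g1: "g1 \<in> ?G u"
    have "integral\<^sup>S M g1 + (SUP g2\<in>?G v. integral\<^sup>S M g2) = (SUP g2\<in>?G v. integral\<^sup>S M g1 + integral\<^sup>S M g2)"
      using ennreal_SUP_add_left[OF ne[of v], where f="\<lambda>g2. integral\<^sup>S M g2" and c="integral\<^sup>S M g1"]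
      by (simp add: add.commute)
    also have "\<dots> \<le> integral\<^sup>N M (\<lambda>x. u x + v x)"
    proof (rule SUP_least)
      fix g2 assume g2: "g2 \<in> ?G v"
      have "integral\<^sup>S M g1 + integral\<^sup>S M g2 = integral\<^sup>S M (\<lambda>x. g1 x + g2 x)"
        using g1 g2 by (intro simple_integral_add[symmetric]) auto
      also have "\<dots> = integral\<^sup>N M (\<lambda>x. g1 x + g2 x)"
        using g1 g2 by (intro nn_integral_eq_simple_integral[symmetric]) auto
      also have "\<dots> \<le> integral\<^sup>N M (\<lambda>x. u x + v x)"
        using g1 g2 by (intro nn_integral_mono add_mono) (auto simp: le_fun_def)
      finally show "integral\<^sup>S M g1 + integral\<^sup>S M g2 \<le> integral\<^sup>N M (\<lambda>x. u x + v x)" .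
    qed
    finally show "integral\<^sup>S M g1 + (SUP g2\<in>?G v. integral\<^sup>S M g2) \<le> integral\<^sup>N M (\<lambda>x. u x + v x)" .
  qed
  finally show ?thesis .
qed

lemma nn_integral_indicator_Un_le:
  fixes f :: "'a \<Rightarrow> ennreal"
  assumes A: "A \<in> sets M" and B: "B \<in> sets M" and AB: "A \<inter> B = {}"
  shows "(\<integral>\<^sup>+x. f x * indicator (A \<union> B) x \<partial>M) \<le> (\<integral>\<^sup>+x. f x * indicator A x \<partial>M) + (\<integral>\<^sup>+x. f x * indicator B x \<partial>M)"
  unfolding nn_integral_def[of M "\<lambda>x. f x * indicator (A \<union> B) x"]
proof (rule SUP_least)
  fix g assume g: "g \<in> {g. simple_function M g \<and> g \<le> (\<lambda>x. f x * indicator (A \<union> B) x)}"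
  then have sg: "simple_function M g" and gle: "\<And>x. g x \<le> f x * indicator (A \<union> B) x" by (auto simp: le_fun_def)
  have split: "g x = g x * indicator A x + g x * indicator B x" for x
  proof (cases "x \<in> A \<union> B")
    case True then show ?thesis using AB by (auto simp: indicator_def)
  next
    case False then have "g x = 0" using gle[of x] by simp
    then show ?thesis by simp
  qed
  have sA: "simple_function M (\<lambda>x. g x * indicator A x)" using sg A by (intro simple_function_mult simple_function_indicator)
  have sB: "simple_function M (\<lambda>x. g x * indicator B x)" using sg B by (intro simple_function_mult simple_function_indicator)
  have "integral\<^sup>S M g = integral\<^sup>N M g" using nn_integral_eq_simple_integral[OF sg] by simp
  also have "\<dots> = integral\<^sup>N M (\<lambda>x. g x * indicator A x + g x * indicator B x)"
    using split by (intro nn_integral_cong) auto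
  also have "\<dots> = integral\<^sup>N M (\<lambda>x. g x * indicator A x) + integral\<^sup>N M (\<lambda>x. g x * indicator B x)"
    using sA sB by (intro nn_integral_add borel_measurable_simple_function)
  also have "\<dots> \<le> (\<integral>\<^sup>+x. f x * indicator A x \<partial>M) + (\<integral>\<^sup>+x. f x * indicator B x \<partial>M)"
  proof (intro add_mono nn_integral_mono)
    fix x
    show "g x * indicator A x \<le> f x * indicator A x" using gle[of x] by (auto simp: indicator_def)
    show "g x * indicator B x \<le> f x * indicator B x" using gle[of x] by (auto simp: indicator_def)
  qed
  finally show "integral\<^sup>S M g \<le> (\<integral>\<^sup>+x. f x * indicator A x \<partial>M) + (\<integral>\<^sup>+x. f x * indicator B x \<partial>M)" .
qed

lemma nn_integral_indicator_Un:
  fixes f :: "'a \<Rightarrow> ennreal"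
  assumes A: "A \<in> sets M" and B: "B \<in> sets M" and AB: "A \<inter> B = {}"
  shows "(\<integral>\<^sup>+x. f x * indicator (A \<union> B) x \<partial>M) = (\<integral>\<^sup>+x. f x * indicator A x \<partial>M) + (\<integral>\<^sup>+x. f x * indicator B x \<partial>M)"
proof (rule antisym[OF nn_integral_indicator_Un_le[OF assms]])
  have "f x * indicator (A \<union> B) x = f x * indicator A x + f x * indicator B x" for x
    using AB by (auto simp: indicator_def)
  then show "(\<integral>\<^sup>+x. f x * indicator A x \<partial>M) + (\<integral>\<^sup>+x. f x * indicator B x \<partial>M) \<le> (\<integral>\<^sup>+x. f x * indicator (A \<union> B) x \<partial>M)"
    using nn_integral_superadditive[of M "\<lambda>x. f x * indicator A x" "\<lambda>x. f x * indicator B x"] by simp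
qed

abbreviation pos_part_integral :: "real set \<Rightarrow> (real \<Rightarrow> ereal) \<Rightarrow> ennreal" where
  "pos_part_integral S h \<equiv> \<integral>\<^sup>+ t\<in>S. e2ennreal (h t) \<partial>lebesgue"

abbreviation neg_part_integral :: "real set \<Rightarrow> (real \<Rightarrow> ereal) \<Rightarrow> ennreal" where
  "neg_part_integral S h \<equiv> \<integral>\<^sup>+ t\<in>S. e2ennreal (- h t) \<partial>lebesgue"

lemma ext_integral_neq_MInfty: "ext_integral S h \<noteq> -\<infinity>"
proof -
  have "enn2ereal (pos_part_integral S h) - enn2ereal (neg_part_integral S h) \<noteq> -\<infinity>" if "neg_part_integral S h \<noteq> \<infinity>"
  proof -
    have "enn2ereal (neg_part_integral S h) \<noteq> \<infinity>" using that enn2ereal_eq_top_iff by (metis infinity_ennreal_def)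
    moreover have "enn2ereal (pos_part_integral S h) \<noteq> -\<infinity>" using enn2ereal_nonneg[of "pos_part_integral S h"] by auto
    ultimately show ?thesis using enn2ereal_nonneg[of "neg_part_integral S h"] by (cases "enn2ereal (pos_part_integral S h)"; cases "enn2ereal (neg_part_integral S h)") auto
  qed
  then show ?thesis unfolding ext_integral_def by auto
qed

lemma AE_Icc_imp_Ioo:
  fixes p q :: real
  shows "AE t in lebesgue. t \<in> {p..q} \<longrightarrow> t \<in> {p<..<q}"
proof (rule AE_I')
  show "{p, q} \<in> null_sets lebesgue" by simp
  show "{t \<in> space lebesgue. \<not> (t \<in> {p..q} \<longrightarrow> t \<in> {p<..<q})} \<subseteq> {p, q}" by auto
qed

lemma set_nn_integral_cong_Ioo:
  fixes p q :: real and F G :: "real \<Rightarrow> ennreal"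
  assumes "\<And>t. t \<in> {p<..<q} \<Longrightarrow> F t = G t"
  shows "(\<integral>\<^sup>+ t\<in>{p..q}. F t \<partial>lebesgue) = (\<integral>\<^sup>+ t\<in>{p..q}. G t \<partial>lebesgue)"
  by (rule nn_integral_cong_AE) (use AE_Icc_imp_Ioo[of p q] assms in \<open>auto elim!: AE_mp simp: indicator_def\<close>)

lemma set_nn_integral_mono_Ioo:
  fixes p q :: real and F G :: "real \<Rightarrow> ennreal"
  assumes "\<And>t. t \<in> {p<..<q} \<Longrightarrow> F t \<le> G t"
  shows "(\<integral>\<^sup>+ t\<in>{p..q}. F t \<partial>lebesgue) \<le> (\<integral>\<^sup>+ t\<in>{p..q}. G t \<partial>lebesgue)"
  by (rule nn_integral_mono_AE) (use AE_Icc_imp_Ioo[of p q] assms in \<open>auto elim!: AE_mp simp: indicator_def\<close>)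

lemma ext_integral_cong_Ioo:
  fixes p q :: real
  assumes "\<And>t. t \<in> {p<..<q} \<Longrightarrow> h1 t = h2 t"
  shows "ext_integral {p..q} h1 = ext_integral {p..q} h2"
proof -
  have "pos_part_integral {p..q} h1 = pos_part_integral {p..q} h2" by (rule set_nn_integral_cong_Ioo) (use assms in auto)
  moreover have "neg_part_integral {p..q} h1 = neg_part_integral {p..q} h2" by (rule set_nn_integral_cong_Ioo) (use assms in auto)
  ultimately show ?thesis unfolding ext_integral_def by simp
qed

lemma set_nn_integral_Icc_split:
  fixes p m q :: real and F :: "real \<Rightarrow> ennreal"
  assumes "p \<le> m" "m \<le> q"
  shows "(\<integral>\<^sup>+ t\<in>{p..q}. F t \<partial>lebesgue) = (\<integral>\<^sup>+ t\<in>{p..m}. F t \<partial>lebesgue) + (\<integral>\<^sup>+ t\<in>{m..q}. F t \<partial>lebesgue)"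
proof -
  have e: "{p..q} = {p..m} \<union> {m<..q}" using assms by auto
  have "(\<integral>\<^sup>+ t\<in>{p..q}. F t \<partial>lebesgue) = (\<integral>\<^sup>+ t\<in>{p..m}. F t \<partial>lebesgue) + (\<integral>\<^sup>+ t\<in>{m<..q}. F t \<partial>lebesgue)"
    unfolding e by (rule nn_integral_indicator_Un) auto
  moreover have "(\<integral>\<^sup>+ t\<in>{m<..q}. F t \<partial>lebesgue) = (\<integral>\<^sup>+ t\<in>{m..q}. F t \<partial>lebesgue)"
  proof (rule nn_integral_cong_AE)
    have "AE t in lebesgue. t \<noteq> m"
      by (rule AE_I'[of "{m}"]) auto
    then show "AE t in lebesgue. F t * indicator {m<..q} t = F t * indicator {m..q} t"
      by (rule AE_mp) (auto simp: indicator_def)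
  qed
  ultimately show ?thesis by simp
qed

lemma ext_integral_Icc_split_le:
  fixes p m q :: real
  assumes "p \<le> m" "m \<le> q"
  shows "ext_integral {p..q} h \<le> ext_integral {p..m} h + ext_integral {m..q} h"
proof -
  have P: "pos_part_integral {p..q} h = pos_part_integral {p..m} h + pos_part_integral {m..q} h" by (rule set_nn_integral_Icc_split[OF assms])
  have N: "neg_part_integral {p..q} h = neg_part_integral {p..m} h + neg_part_integral {m..q} h" by (rule set_nn_integral_Icc_split[OF assms])
  show ?thesis
  proof (cases "neg_part_integral {p..m} h = \<infinity> \<or> neg_part_integral {m..q} h = \<infinity>")
    case True
    then have "ext_integral {p..m} h = \<infinity> \<or> ext_integral {m..q} h = \<infinity>"
      unfolding ext_integral_def by auto
    then have "ext_integral {p..m} h + ext_integral {m..q} h = \<infinity>"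
      using ext_integral_neq_MInfty[of "{p..m}" h] ext_integral_neq_MInfty[of "{m..q}" h] by auto
    then show ?thesis by (metis ereal_less_eq(1))
  next
    case False
    then have f1: "neg_part_integral {p..m} h \<noteq> \<infinity>" and f2: "neg_part_integral {m..q} h \<noteq> \<infinity>" by auto
    then have f3: "neg_part_integral {p..q} h \<noteq> \<infinity>" unfolding N by (simp add: infinity_ennreal_def)
    obtain n1 where n1: "enn2ereal (neg_part_integral {p..m} h) = ereal n1"
      using f1 enn2ereal_nonneg[of "neg_part_integral {p..m} h"] enn2ereal_eq_top_iff
      by (cases "enn2ereal (neg_part_integral {p..m} h)") (auto simp: infinity_ennreal_def)
    obtain n2 where n2: "enn2ereal (neg_part_integral {m..q} h) = ereal n2"
      using f2 enn2ereal_nonneg[of "neg_part_integral {m..q} h"] enn2ereal_eq_top_iff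
      by (cases "enn2ereal (neg_part_integral {m..q} h)") (auto simp: infinity_ennreal_def)
    have a1: "enn2ereal (pos_part_integral {p..m} h) \<noteq> -\<infinity>" "enn2ereal (pos_part_integral {m..q} h) \<noteq> -\<infinity>"
      using enn2ereal_nonneg by (metis MInfty_neq_ereal(1) ereal_less_eq(2) ereal_infty_less_eq(2) zero_ereal_def)+
    have "ext_integral {p..q} h = enn2ereal (pos_part_integral {p..m} h) + enn2ereal (pos_part_integral {m..q} h) - (ereal n1 + ereal n2)"
      unfolding ext_integral_def using f3 unfolding P N plus_ennreal.rep_eq n1 n2 by simp
    also have "\<dots> = (enn2ereal (pos_part_integral {p..m} h) - ereal n1) + (enn2ereal (pos_part_integral {m..q} h) - ereal n2)"
      using a1 by (cases "enn2ereal (pos_part_integral {p..m} h)"; cases "enn2ereal (pos_part_integral {m..q} h)") auto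
    also have "\<dots> = ext_integral {p..m} h + ext_integral {m..q} h"
      unfolding ext_integral_def using f1 f2 n1 n2 by simp
    finally show ?thesis by simp
  qed
qed

lemma set_nn_integral_Icc_le_const:
  fixes p q :: real
  assumes "p \<le> q" "\<And>t. t \<in> {p<..<q} \<Longrightarrow> F t \<le> ennreal c"
  shows "(\<integral>\<^sup>+ t\<in>{p..q}. F t \<partial>lebesgue) \<le> ennreal c * ennreal (q - p)"
proof -
  have "(\<integral>\<^sup>+ t\<in>{p..q}. F t \<partial>lebesgue) \<le> (\<integral>\<^sup>+ t\<in>{p..q}. ennreal c \<partial>lebesgue)"
    using assms(2) by (rule set_nn_integral_mono_Ioo)
  also have "\<dots> = ennreal c * ennreal (q - p)" using assms(1) by (subst nn_integral_cmult_indicator) auto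
  finally show ?thesis .
qed

lemma set_nn_integral_Icc_ge_const:
  fixes p q :: real
  assumes "p \<le> q" "\<And>t. t \<in> {p<..<q} \<Longrightarrow> ennreal c \<le> F t"
  shows "ennreal c * ennreal (q - p) \<le> (\<integral>\<^sup>+ t\<in>{p..q}. F t \<partial>lebesgue)"
proof -
  have "ennreal c * ennreal (q - p) = (\<integral>\<^sup>+ t\<in>{p..q}. ennreal c \<partial>lebesgue)"
    using assms(1) by (subst nn_integral_cmult_indicator) auto
  also have "\<dots> \<le> (\<integral>\<^sup>+ t\<in>{p..q}. F t \<partial>lebesgue)" using assms(2) by (rule set_nn_integral_mono_Ioo)
  finally show ?thesis .
qed

lemma e2ennreal_le_ennreal: "x \<le> ereal c \<Longrightarrow> e2ennreal x \<le> ennreal c"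
  by (metis e2ennreal_mono e2ennreal_ereal)

lemma ext_integral_le_const:
  fixes p q c1 c2 :: real
  assumes pq: "p \<le> q" and hb: "\<And>t. t \<in> {p<..<q} \<Longrightarrow> ereal c1 \<le> h t \<and> h t \<le> ereal c2"
  shows "ext_integral {p..q} h \<le> ereal (c2 * (q - p))"
proof -
  have P: "pos_part_integral {p..q} h \<le> ennreal c2 * ennreal (q - p)"
    using hb by (intro set_nn_integral_Icc_le_const[OF pq] e2ennreal_le_ennreal) blast
  have N1: "ennreal (- c2) * ennreal (q - p) \<le> neg_part_integral {p..q} h"
    using hb by (intro set_nn_integral_Icc_ge_const[OF pq]) (metis e2ennreal_mono e2ennreal_ereal ereal_minus_le_minus uminus_ereal.simps(1))
  have N2: "neg_part_integral {p..q} h \<le> ennreal (- c1) * ennreal (q - p)"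
    using hb by (intro set_nn_integral_Icc_le_const[OF pq] e2ennreal_le_ennreal) (metis ereal_minus_le_minus uminus_ereal.simps(1))
  have Nfin: "neg_part_integral {p..q} h \<noteq> \<infinity>"
    using N2 by (metis ennreal_mult_eq_top_iff ennreal_neq_top infinity_ennreal_def neq_top_trans)
  have "ext_integral {p..q} h = enn2ereal (pos_part_integral {p..q} h) - enn2ereal (neg_part_integral {p..q} h)"
    unfolding ext_integral_def using Nfin by simp
  also have "\<dots> \<le> enn2ereal (ennreal c2 * ennreal (q - p)) - enn2ereal (ennreal (- c2) * ennreal (q - p))"
  proof (rule ereal_minus_mono)
    show "enn2ereal (pos_part_integral {p..q} h) \<le> enn2ereal (ennreal c2 * ennreal (q - p))" using P by (simp add: less_eq_ennreal.rep_eq)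
    show "enn2ereal (ennreal (- c2) * ennreal (q - p)) \<le> enn2ereal (neg_part_integral {p..q} h)" using N1 by (simp add: less_eq_ennreal.rep_eq)
  qed
  also have "\<dots> = ereal (c2 * (q - p))"
  proof (cases "c2 \<ge> 0")
    case True
    then show ?thesis using pq by (simp add: ennreal_mult'[symmetric] ennreal_neg zero_ennreal.rep_eq)
  next
    case False
    then have "0 \<le> - (c2 * (q - p))" using pq by (simp add: mult_nonpos_nonneg)
    then show ?thesis using pq False by (simp add: ennreal_mult'[symmetric] ennreal_neg zero_ennreal.rep_eq enn2ereal_ennreal)
  qed
  finally show ?thesis .
qed

section \<open>Absolutely continuous arcs\<close>

definition disjoint_intervals_in :: "real \<Rightarrow> real \<Rightarrow> nat \<Rightarrow> (nat \<Rightarrow> real) \<Rightarrow> (nat \<Rightarrow> real) \<Rightarrow> bool" where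
  "disjoint_intervals_in a b n l r \<longleftrightarrow> (\<forall>k<n. a \<le> l k \<and> l k \<le> r k \<and> r k \<le> b) \<and>
     (\<forall>i<n. \<forall>j<n. i \<noteq> j \<longrightarrow> {l i<..<r i} \<inter> {l j<..<r j} = {})"

lemma abs_cont_on_iff:
  "abs_cont_on a b x \<longleftrightarrow> (\<forall>\<epsilon>>0. \<exists>\<delta>>0. \<forall>n l r. disjoint_intervals_in a b n l r \<longrightarrow>
      (\<Sum>k<n. r k - l k) < \<delta> \<longrightarrow> (\<Sum>k<n. norm (x (r k) - x (l k))) < \<epsilon>)"
  unfolding abs_cont_on_def disjoint_intervals_in_def by (simp only: imp_conjL)

lemma disjoint_intervals_in_clip:
  fixes c d :: real
  defines "clip t \<equiv> max c (min t d)"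
  assumes lr: "disjoint_intervals_in a b n l r" and cd: "c \<le> d"
  shows "disjoint_intervals_in c d n (\<lambda>k. clip (l k)) (\<lambda>k. clip (r k))"
    and "(\<Sum>k<n. clip (r k) - clip (l k)) \<le> (\<Sum>k<n. r k - l k)"
proof -
  have ordered: "l k \<le> r k" if "k < n" for k using lr that by (simp add: disjoint_intervals_in_def)
  have sub: "{clip (l k)<..<clip (r k)} \<subseteq> {l k<..<r k}" if k: "k < n" for k
    using ordered[OF k] cd by (auto simp: clip_def max_def min_def split: if_splits)
  have "c \<le> clip (l k) \<and> clip (l k) \<le> clip (r k) \<and> clip (r k) \<le> d" if k: "k < n" for k
    using ordered[OF k] cd by (auto simp: clip_def max_def min_def)
  moreover have "{clip (l i)<..<clip (r i)} \<inter> {clip (l j)<..<clip (r j)} = {}"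
    if "i < n" "j < n" "i \<noteq> j" for i j
    using sub[OF that(1)] sub[OF that(2)] lr that unfolding disjoint_intervals_in_def by blast
  ultimately show "disjoint_intervals_in c d n (\<lambda>k. clip (l k)) (\<lambda>k. clip (r k))"
    unfolding disjoint_intervals_in_def by blast
  show "(\<Sum>k<n. clip (r k) - clip (l k)) \<le> (\<Sum>k<n. r k - l k)"
  proof (rule sum_mono)
    fix k assume "k \<in> {..<n}"
    then show "clip (r k) - clip (l k) \<le> r k - l k"
      using ordered[of k] by (auto simp: clip_def max_def min_def)
  qed
qed

lemma abs_cont_on_clipped:
  fixes x :: "real \<Rightarrow> 'b::real_normed_vector" and c d :: real
  defines "clip t \<equiv> max c (min t d)"
  assumes x: "abs_cont_on c d x" and cd: "c \<le> d" and \<epsilon>: "\<epsilon> > 0"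
  obtains \<delta> where "\<delta> > 0" "\<And>n l r. disjoint_intervals_in a b n l r \<Longrightarrow> (\<Sum>k<n. r k - l k) < \<delta> \<Longrightarrow>
    (\<Sum>k<n. norm (x (clip (r k)) - x (clip (l k)))) < \<epsilon>"
proof -
  obtain \<delta> where "\<delta> > 0" and \<delta>: "\<And>n l r. disjoint_intervals_in c d n l r \<Longrightarrow> (\<Sum>k<n. r k - l k) < \<delta> \<Longrightarrow>
      (\<Sum>k<n. norm (x (r k) - x (l k))) < \<epsilon>"
    using x \<epsilon> unfolding abs_cont_on_iff by blast
  show ?thesis
  proof (rule that[OF \<open>\<delta> > 0\<close>])
    fix n l r assume lr: "disjoint_intervals_in a b n l r" and short: "(\<Sum>k<n. r k - l k) < \<delta>"
    show "(\<Sum>k<n. norm (x (clip (r k)) - x (clip (l k)))) < \<epsilon>"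
      using \<delta>[OF disjoint_intervals_in_clip(1)[OF lr cd]] disjoint_intervals_in_clip(2)[OF lr cd] short
      unfolding clip_def by linarith
  qed
qed

lemma abs_cont_on_concat:
  fixes y z :: "real \<Rightarrow> 'b::real_normed_vector"
  assumes y: "abs_cont_on a m y" and z: "abs_cont_on m b z" and am: "a \<le> m" "m \<le> b" and eq: "y m = z m"
  shows "abs_cont_on a b (\<lambda>t. if t \<le> m then y t else z t)"
  unfolding abs_cont_on_iff
proof (intro allI impI)
  fix \<epsilon> :: real assume "\<epsilon> > 0"
  then have "\<epsilon>/2 > 0" by simp
  obtain \<delta>1 where "\<delta>1 > 0" and \<delta>1: "\<And>n l r. disjoint_intervals_in a b n l r \<Longrightarrow> (\<Sum>k<n. r k - l k) < \<delta>1 \<Longrightarrow>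
      (\<Sum>k<n. norm (y (max a (min (r k) m)) - y (max a (min (l k) m)))) < \<epsilon>/2"
    using abs_cont_on_clipped[OF y am(1) \<open>\<epsilon>/2 > 0\<close>] by blast
  obtain \<delta>2 where "\<delta>2 > 0" and \<delta>2: "\<And>n l r. disjoint_intervals_in a b n l r \<Longrightarrow> (\<Sum>k<n. r k - l k) < \<delta>2 \<Longrightarrow>
      (\<Sum>k<n. norm (z (max m (min (r k) b)) - z (max m (min (l k) b)))) < \<epsilon>/2"
    using abs_cont_on_clipped[OF z am(2) \<open>\<epsilon>/2 > 0\<close>] by blast
  let ?w = "\<lambda>t. if t \<le> m then y t else z t"
  show "\<exists>\<delta>>0. \<forall>n l r. disjoint_intervals_in a b n l r \<longrightarrow> (\<Sum>k<n. r k - l k) < \<delta> \<longrightarrow>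
      (\<Sum>k<n. norm (?w (r k) - ?w (l k))) < \<epsilon>"
  proof (intro exI[of _ "min \<delta>1 \<delta>2"] conjI allI impI)
    show "min \<delta>1 \<delta>2 > 0" using \<open>\<delta>1 > 0\<close> \<open>\<delta>2 > 0\<close> by simp
    fix n l r assume lr: "disjoint_intervals_in a b n l r" and short: "(\<Sum>k<n. r k - l k) < min \<delta>1 \<delta>2"
    have "norm (?w (r k) - ?w (l k)) \<le> norm (y (max a (min (r k) m)) - y (max a (min (l k) m)))
        + norm (z (max m (min (r k) b)) - z (max m (min (l k) b)))" if "k < n" for k
    proof -
      have k: "a \<le> l k" "l k \<le> r k" "r k \<le> b" using lr that by (auto simp: disjoint_intervals_in_def)
      consider "r k \<le> m" | "l k \<le> m" "m < r k" | "m < l k" by linarith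
      then show ?thesis
      proof cases
        case 1
        then have "max a (min (r k) m) = r k" "max a (min (l k) m) = l k"
          "max m (min (r k) b) = m" "max m (min (l k) b) = m" using k by auto
        then show ?thesis using 1 k by simp
      next
        case 2
        then have "max a (min (r k) m) = m" "max a (min (l k) m) = l k"
          "max m (min (r k) b) = r k" "max m (min (l k) b) = m" using k by auto
        moreover have "?w (r k) - ?w (l k) = (y m - y (l k)) + (z (r k) - z m)" using 2 eq by simp
        ultimately show ?thesis by (simp add: norm_triangle_ineq)
      next
        case 3
        then have "max a (min (r k) m) = m" "max a (min (l k) m) = m"
          "max m (min (r k) b) = r k" "max m (min (l k) b) = l k" using k am by auto
        then show ?thesis using 3 k by simp
      qed
    qed
    then have "(\<Sum>k<n. norm (?w (r k) - ?w (l k))) \<le>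
        (\<Sum>k<n. norm (y (max a (min (r k) m)) - y (max a (min (l k) m))))
        + (\<Sum>k<n. norm (z (max m (min (r k) b)) - z (max m (min (l k) b))))"
      unfolding sum.distrib[symmetric] by (intro sum_mono) simp
    also have "\<dots> < \<epsilon>/2 + \<epsilon>/2" using \<delta>1[OF lr] \<delta>2[OF lr] short by (intro add_strict_mono) auto
    finally show "(\<Sum>k<n. norm (?w (r k) - ?w (l k))) < \<epsilon>" by simp
  qed
qed

lemma lipschitz_on_imp_abs_cont_on:
  fixes x :: "real \<Rightarrow> 'b::real_normed_vector"
  assumes "M-lipschitz_on {a..b} x"
  shows "abs_cont_on a b x"
  unfolding abs_cont_on_iff
proof (intro allI impI)
  fix \<epsilon> :: real assume \<epsilon>: "\<epsilon> > 0"
  have M: "0 \<le> M" using assms by (rule lipschitz_on_nonneg)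
  show "\<exists>\<delta>>0. \<forall>n l r. disjoint_intervals_in a b n l r \<longrightarrow>
      (\<Sum>k<n. r k - l k) < \<delta> \<longrightarrow> (\<Sum>k<n. norm (x (r k) - x (l k))) < \<epsilon>"
  proof (intro exI[of _ "\<epsilon> / (M + 1)"] conjI allI impI)
    show "\<epsilon> / (M + 1) > 0" using \<epsilon> M by simp
    fix n l r assume lr: "disjoint_intervals_in a b n l r" and short: "(\<Sum>k<n. r k - l k) < \<epsilon> / (M + 1)"
    have "(\<Sum>k<n. norm (x (r k) - x (l k))) \<le> (\<Sum>k<n. M * (r k - l k))"
    proof (rule sum_mono)
      fix k assume "k \<in> {..<n}"
      then have "a \<le> l k" "l k \<le> r k" "r k \<le> b" using lr by (auto simp: disjoint_intervals_in_def)
      then show "norm (x (r k) - x (l k)) \<le> M * (r k - l k)"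
        using lipschitz_onD[OF assms, of "r k" "l k"] by (simp add: dist_norm dist_real_def)
    qed
    also have "\<dots> = M * (\<Sum>k<n. r k - l k)" by (simp add: sum_distrib_left)
    also have "\<dots> \<le> M * (\<epsilon> / (M + 1))" using short M by (intro mult_left_mono) auto
    also have "\<dots> < \<epsilon>" using M \<epsilon> by (simp add: field_simps)
    finally show "(\<Sum>k<n. norm (x (r k) - x (l k))) < \<epsilon>" .
  qed
qed

lemma lipschitz_on_if_vector_derivative_bound:
  fixes \<phi> :: "real \<Rightarrow> 'b::real_normed_vector"
  assumes deriv: "\<And>t. t \<in> {a..b} \<Longrightarrow> (\<phi> has_vector_derivative \<phi>' t) (at t within {a..b})"
    and bound: "\<And>t. t \<in> {a..b} \<Longrightarrow> norm (\<phi>' t) \<le> B" and B: "0 \<le> B"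
  shows "B-lipschitz_on {a..b} \<phi>"
proof (rule lipschitz_onI[OF _ B])
  fix s t assume "s \<in> {a..b}" "t \<in> {a..b}"
  have "norm (\<phi> s - \<phi> t) \<le> B * norm (s - t)"
  proof (rule differentiable_bound[of "{a..b}" \<phi> "\<lambda>t h. h *\<^sub>R \<phi>' t"])
    show "(\<phi> has_derivative (\<lambda>h. h *\<^sub>R \<phi>' x)) (at x within {a..b})" if "x \<in> {a..b}" for x
      using deriv[OF that] by (simp add: has_vector_derivative_def)
    show "onorm (\<lambda>h. h *\<^sub>R \<phi>' x) \<le> B" if "x \<in> {a..b}" for x
      using bound[OF that] onorm_scaleR_left[OF bounded_linear_ident, of "\<phi>' x"] by (simp add: onorm_id)
  qed (use \<open>s \<in> {a..b}\<close> \<open>t \<in> {a..b}\<close> in auto)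
  then show "dist (\<phi> s) (\<phi> t) \<le> B * dist s t" by (simp add: dist_norm)
qed

section \<open>Lower semicontinuity, subderivatives and the value function\<close>

lemma lsc_on_compact_bounded_below:
  fixes F :: "'b::metric_space \<Rightarrow> ereal"
  assumes lsc: "lsc_on S F" and C: "compact C" "C \<subseteq> S" and nm: "\<forall>p\<in>C. F p \<noteq> -\<infinity>"
  shows "\<exists>B. \<forall>p\<in>C. ereal B \<le> F p"
proof (rule ccontr)
  assume "\<not> (\<exists>B. \<forall>p\<in>C. ereal B \<le> F p)"
  then have "\<forall>n::nat. \<exists>p\<in>C. F p < ereal (- real n)" by (meson not_le)
  then obtain P where P: "\<And>n. P n \<in> C" "\<And>n. F (P n) < ereal (- real n)" by metis
  obtain l r where l: "l \<in> C" "strict_mono r" "(P \<circ> r) \<longlonglongrightarrow> l"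
    using C(1)[unfolded compact_def, rule_format, of P] P(1) by blast
  have "F l \<le> liminf (\<lambda>n. F ((P \<circ> r) n))"
    using lsc[unfolded lsc_on_def, rule_format, of l "P \<circ> r"] C(2) l P(1) by (auto simp: subset_iff)
  also have "\<dots> \<le> ereal (- real N)" for N
  proof (rule Liminf_le)
    show "sequentially \<noteq> bot" by simp
    have "F ((P \<circ> r) n) \<le> ereal (- real N)" if "n \<ge> N" for n
    proof -
      have "N \<le> r n" using seq_suble[OF l(2), of n] that by simp
      then have h1: "ereal (- real (r n)) \<le> ereal (- real N)" by simp
      have "F (P (r n)) \<le> ereal (- real (r n))" using P(2)[of "r n"] by (rule less_imp_le)
      then show ?thesis unfolding comp_def using h1 by (rule order.trans)
    qed
    then show "\<forall>\<^sub>F n in sequentially. F ((P \<circ> r) n) \<le> ereal (- real N)"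
      by (auto simp: eventually_sequentially)
  qed
  finally have le: "F l \<le> ereal (- real N)" for N .
  show False
  proof (cases "F l")
    case (real x)
    obtain N :: nat where "real N > - x" using reals_Archimedean2 by blast
    then show False using le[of N] real by simp
  next
    case PInf then show False using le[of 0] by simp
  next
    case MInf then show False using nm l by simp
  qed
qed

lemma ereal_diff_quotient_le:
  fixes X V :: ereal
  assumes V: "\<bar>V\<bar> \<noteq> \<infinity>" and X: "X \<le> V + ereal (\<tau> * k)" and \<tau>: "\<tau> > 0"
  shows "(X - V) / ereal \<tau> \<le> ereal k"
proof -
  obtain v where v: "V = ereal v" using V by (cases V) auto
  show ?thesis
  proof (cases X)
    case (real x)
    then have "x \<le> v + \<tau> * k" using X v by simp
    then have "(x - v) / \<tau> \<le> k" using \<tau> by (simp add: field_simps)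
    then show ?thesis using real v \<tau> by simp
  next
    case PInf then show ?thesis using X v by simp
  next
    case MInf then show ?thesis using v \<tau> by simp
  qed
qed

lemma subderiv_leI:
  fixes \<phi> :: "'b::real_normed_vector \<Rightarrow> ereal"
  assumes fin: "\<bar>\<phi> z\<bar> \<noteq> \<infinity>"
    and H: "\<And>\<epsilon> r \<delta>. \<epsilon> > 0 \<Longrightarrow> r > 0 \<Longrightarrow> \<delta> > 0 \<Longrightarrow>
       \<exists>\<tau> u. 0 < \<tau> \<and> \<tau> < \<delta> \<and> dist u w < r \<and> \<phi> (z + \<tau> *\<^sub>R u) \<le> \<phi> z + ereal (\<tau> * (c + \<epsilon>))"
  shows "subderiv \<phi> z w \<le> ereal c"
proof (rule ereal_le_epsilon2)
  fix \<epsilon> :: real assume \<epsilon>: "\<epsilon> > 0"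
  show "subderiv \<phi> z w \<le> ereal c + ereal \<epsilon>"
    unfolding subderiv_def
  proof (rule Liminf_least)
    fix P assume "eventually P (at_right (0::real) \<times>\<^sub>F nhds w)"
    then obtain Pf Pg where Pf: "eventually Pf (at_right (0::real))" and Pg: "eventually Pg (nhds w)"
      and PP: "\<And>x y. Pf x \<Longrightarrow> Pg y \<Longrightarrow> P (x, y)"
      unfolding eventually_prod_filter by blast
    obtain b where b: "b > 0" "\<And>y. y > 0 \<Longrightarrow> y < b \<Longrightarrow> Pf y"
      using Pf unfolding eventually_at_right_field by auto
    obtain d where d: "d > 0" "\<And>y. dist y w < d \<Longrightarrow> Pg y"
      using Pg unfolding eventually_nhds_metric by auto
    obtain \<tau> u where tu: "0 < \<tau>" "\<tau> < b" "dist u w < d" "\<phi> (z + \<tau> *\<^sub>R u) \<le> \<phi> z + ereal (\<tau> * (c + \<epsilon>))"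
      using H[OF \<epsilon> d(1) b(1)] by blast
    have Pt: "P (\<tau>, u)" using PP b(2) d(2) tu by blast
    have "Inf ((\<lambda>(\<tau>, y). (\<phi> (z + \<tau> *\<^sub>R y) - \<phi> z) / ereal \<tau>) ` Collect P) \<le> (\<phi> (z + \<tau> *\<^sub>R u) - \<phi> z) / ereal \<tau>"
      using Pt by (intro Inf_lower) (auto intro!: image_eqI[of _ _ "(\<tau>, u)"])
    also have "\<dots> \<le> ereal (c + \<epsilon>)" by (rule ereal_diff_quotient_le[OF fin tu(4) tu(1)])
    finally show "Inf ((\<lambda>(\<tau>, y). (\<phi> (z + \<tau> *\<^sub>R y) - \<phi> z) / ereal \<tau>) ` Collect P) \<le> ereal c + ereal \<epsilon>" by simp
  qed
qed

lemma vector_derivative_at_within_cong: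
  assumes "open S" "t \<in> S" "\<And>s. s \<in> S \<Longrightarrow> x s = y s"
    and "t \<in> interior A" "t \<in> interior B"
  shows "vector_derivative x (at t within A) = vector_derivative y (at t within B)"
proof -
  have "eventually (\<lambda>s. s \<in> S) (nhds t)" by (rule eventually_nhds_in_open[OF assms(1,2)])
  then have "eventually (\<lambda>s. s \<in> UNIV \<longrightarrow> x s = y s) (nhds t)"
    by (rule eventually_mono) (simp add: assms(3))
  then have "vector_derivative x (at t within UNIV) = vector_derivative y (at t within UNIV)"
    by (rule vector_derivative_cong_eq) simp_all
  then show ?thesis by (simp only: at_within_interior[OF assms(4)] at_within_interior[OF assms(5)])
qed

definition arc_cost :: "(real \<Rightarrow> 'a \<Rightarrow> 'a \<Rightarrow> ereal) \<Rightarrow> real \<Rightarrow> real \<Rightarrow> (real \<Rightarrow> 'a::real_normed_vector) \<Rightarrow> ereal"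
  where "arc_cost L s t x = ext_integral {s..t} (\<lambda>\<tau>. L \<tau> (x \<tau>) (vector_derivative x (at \<tau> within {s..t})))"

lemma value_fn_eq_INF:
  assumes "0 \<le> s" "s < T"
  shows "value_fn T L g (s, x0) = (INF x \<in> {x. abs_cont_on s T x \<and> x s = x0}. g (x T) + arc_cost L s T x)"
  using assms by (simp add: value_fn_def arc_cost_def)

lemma arc_cost_concat_le:
  assumes "s < t" "t < T"
  shows "arc_cost L s T (\<lambda>\<tau>. if \<tau> \<le> t then y \<tau> else z \<tau>) \<le> arc_cost L s t y + arc_cost L t T z"
proof -
  define w where "w = (\<lambda>\<tau>. if \<tau> \<le> t then y \<tau> else z \<tau>)"
  define hw where "hw = (\<lambda>\<tau>. L \<tau> (w \<tau>) (vector_derivative w (at \<tau> within {s..T})))"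
  have "arc_cost L s T w \<le> ext_integral {s..t} hw + ext_integral {t..T} hw"
    unfolding arc_cost_def hw_def[symmetric] using assms by (intro ext_integral_Icc_split_le) auto
  also have "ext_integral {s..t} hw = arc_cost L s t y"
    unfolding arc_cost_def
  proof (rule ext_integral_cong_Ioo)
    fix \<tau> assume \<tau>: "\<tau> \<in> {s<..<t}"
    have "vector_derivative w (at \<tau> within {s..T}) = vector_derivative y (at \<tau> within {s..t})"
      by (rule vector_derivative_at_within_cong[of "{..<t}"]) (use \<tau> assms in \<open>auto simp: w_def\<close>)
    then show "hw \<tau> = L \<tau> (y \<tau>) (vector_derivative y (at \<tau> within {s..t}))"
      using \<tau> by (simp add: hw_def) (simp add: w_def)
  qed
  also have "ext_integral {t..T} hw = arc_cost L t T z"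
    unfolding arc_cost_def
  proof (rule ext_integral_cong_Ioo)
    fix \<tau> assume \<tau>: "\<tau> \<in> {t<..<T}"
    have "vector_derivative w (at \<tau> within {s..T}) = vector_derivative z (at \<tau> within {t..T})"
      by (rule vector_derivative_at_within_cong[of "{t<..}"]) (use \<tau> assms in \<open>auto simp: w_def\<close>)
    then show "hw \<tau> = L \<tau> (z \<tau>) (vector_derivative z (at \<tau> within {t..T}))"
      using \<tau> by (simp add: hw_def) (simp add: w_def)
  qed
  finally show ?thesis unfolding w_def .
qed

text \<open>Dynamic programming inequality: starting at \<open>(s, y s)\<close>, one may follow \<open>y\<close> up to time \<open>t\<close>
  and then continue along any admissible arc from \<open>(t, y t)\<close>.\<close>
lemma value_fn_le_arc_cost:
  fixes L :: "real \<Rightarrow> 'a::euclidean_space \<Rightarrow> 'a \<Rightarrow> ereal"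
  assumes st: "0 \<le> s" "s < t" "t \<le> T" and y: "abs_cont_on s t y"
  shows "value_fn T L g (s, y s) \<le> arc_cost L s t y + value_fn T L g (t, y t)"
proof (cases "t = T")
  case True
  then have "value_fn T L g (s, y s) \<le> g (y T) + arc_cost L s T y"
    unfolding value_fn_eq_INF[OF st(1,2)[unfolded True]] using y by (intro INF_lower) auto
  then show ?thesis using True by (simp add: value_fn_def add.commute)
next
  case False
  then have "t < T" using st by simp
  have le_concat: "value_fn T L g (s, y s) \<le> arc_cost L s t y + (g (z T) + arc_cost L t T z)"
    if z: "abs_cont_on t T z" "z t = y t" for z
  proof -
    let ?w = "\<lambda>\<tau>. if \<tau> \<le> t then y \<tau> else z \<tau>"
    have "abs_cont_on s T ?w" by (rule abs_cont_on_concat[OF y z(1)]) (use st \<open>t < T\<close> z(2) in auto)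
    then have "value_fn T L g (s, y s) \<le> g (?w T) + arc_cost L s T ?w"
      unfolding value_fn_eq_INF[OF st(1) order.strict_trans[OF st(2) \<open>t < T\<close>]] using st
      by (intro INF_lower) simp
    also have "\<dots> \<le> g (z T) + (arc_cost L s t y + arc_cost L t T z)"
      using \<open>t < T\<close> st arc_cost_concat_le[of s t T L y z] by (simp add: add_left_mono)
    finally show ?thesis by (simp add: ac_simps)
  qed
  show ?thesis
  proof (cases "arc_cost L s t y")
    case (real i)
    have "value_fn T L g (s, y s) - arc_cost L s t y \<le> value_fn T L g (t, y t)"
      unfolding value_fn_eq_INF[OF order.trans[OF st(1) less_imp_le[OF st(2)]] \<open>t < T\<close>]
      using le_concat real by (intro INF_greatest) (auto simp: ereal_minus_le add.commute)
    then show ?thesis using real by (simp add: ereal_minus_le add.commute)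
  qed (use ext_integral_neq_MInfty in \<open>auto simp: arc_cost_def\<close>)
qed

section \<open>Lagrangians of the Bolza problem\<close>

lemma convex_ereal_strict_sublevel:
  fixes \<phi> :: "'b::real_vector \<Rightarrow> ereal"
  assumes cvx: "ereal_convex \<phi>" and not_MInf: "\<And>v. \<phi> v \<noteq> -\<infinity>"
  shows "convex {v. \<phi> v < ereal c}"
  unfolding convex_alt
proof (intro ballI allI impI)
  fix v1 v2 and u :: real assume "v1 \<in> {v. \<phi> v < ereal c}" "v2 \<in> {v. \<phi> v < ereal c}" "0 \<le> u \<and> u \<le> 1"
  then have v: "\<phi> v1 < ereal c" "\<phi> v2 < ereal c" and u: "0 \<le> u" "u \<le> 1" by auto
  obtain l1 l2 where l: "\<phi> v1 = ereal l1" "\<phi> v2 = ereal l2" using v not_MInf by (metis less_ereal.simps(2) ereal_cases)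
  have "\<phi> ((1 - u) *\<^sub>R v1 + (1 - (1 - u)) *\<^sub>R v2) \<le> ereal (1 - u) * \<phi> v1 + ereal (1 - (1 - u)) * \<phi> v2"
    by (rule cvx[unfolded ereal_convex_def, rule_format]) (use u in auto)
  also have "\<dots> = ereal ((1 - u) * l1 + u * l2)" using l by simp
  also have "\<dots> < ereal c" using v l u by (simp add: convex_bound_lt)
  finally show "(1 - u) *\<^sub>R v1 + u *\<^sub>R v2 \<in> {v. \<phi> v < ereal c}" by simp
qed

lemma backward_trajectory:
  fixes f :: "real \<times> 'a::euclidean_space \<Rightarrow> 'a"
  assumes cont: "continuous_on ({t0 - \<rho>..t0} \<times> cball x0 \<rho>) f"
    and near_v0: "\<And>p. p \<in> {t0 - \<rho>..t0} \<times> cball x0 \<rho> \<Longrightarrow> dist (f p) v0 \<le> e" and e: "0 \<le> e"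
    and \<tau>: "0 < \<tau>" "\<tau> \<le> \<rho>" "(norm v0 + e) * \<tau> \<le> \<rho>"
  obtains y where "y t0 = x0" "abs_cont_on (t0 - \<tau>) t0 y"
    "\<And>t. t \<in> {t0 - \<tau>..t0} \<Longrightarrow> (t, y t) \<in> {t0 - \<rho>..t0} \<times> cball x0 \<rho>"
    "\<And>t. t \<in> {t0 - \<tau>..t0} \<Longrightarrow> (y has_vector_derivative f (t, y t)) (at t within {t0 - \<tau>..t0})"
    "norm (x0 - y (t0 - \<tau>) - \<tau> *\<^sub>R v0) \<le> e * \<tau>"
proof -
  have sub: "{t0 - \<tau>..t0} \<times> cball x0 \<rho> \<subseteq> {t0 - \<rho>..t0} \<times> cball x0 \<rho>" using \<tau> by auto
  have bound: "norm (f p) \<le> norm v0 + e" if "p \<in> {t0 - \<rho>..t0} \<times> cball x0 \<rho>" for p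
    using norm_triangle_ineq2[of "f p" v0] near_v0[OF that] by (simp add: dist_norm)
  have "t0 - \<tau> < t0" "0 \<le> norm v0 + e" "(norm v0 + e) * (t0 - (t0 - \<tau>)) \<le> \<rho>" using \<tau> e by auto
  moreover have "\<And>p. p \<in> {t0 - \<tau>..t0} \<times> cball x0 \<rho> \<Longrightarrow> norm (f p) \<le> norm v0 + e" using bound sub by blast
  ultimately obtain y where y0: "y t0 = x0" and y_in: "\<And>t. t \<in> {t0 - \<tau>..t0} \<Longrightarrow> y t \<in> cball x0 \<rho>"
    and y': "\<And>t. t \<in> {t0 - \<tau>..t0} \<Longrightarrow> (y has_vector_derivative f (t, y t)) (at t within {t0 - \<tau>..t0})"
    using peano_existence_backward[OF _ continuous_on_subset[OF cont sub]] by metis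
  have in_rect: "(t, y t) \<in> {t0 - \<rho>..t0} \<times> cball x0 \<rho>" if "t \<in> {t0 - \<tau>..t0}" for t
    using that y_in[OF that] \<tau> by auto
  have "(norm v0 + e)-lipschitz_on {t0 - \<tau>..t0} y"
    by (rule lipschitz_on_if_vector_derivative_bound[OF y']) (use bound in_rect e in auto)
  then have "abs_cont_on (t0 - \<tau>) t0 y" by (rule lipschitz_on_imp_abs_cont_on)
  have "e-lipschitz_on {t0 - \<tau>..t0} (\<lambda>t. y t - t *\<^sub>R v0)"
  proof (rule lipschitz_on_if_vector_derivative_bound[OF _ _ e])
    show "((\<lambda>t. y t - t *\<^sub>R v0) has_vector_derivative f (t, y t) - v0) (at t within {t0 - \<tau>..t0})"
      if "t \<in> {t0 - \<tau>..t0}" for t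
      using y'[OF that] by (auto intro!: derivative_eq_intros)
    show "norm (f (t, y t) - v0) \<le> e" if "t \<in> {t0 - \<tau>..t0}" for t
      using near_v0[OF in_rect[OF that]] by (simp add: dist_norm)
  qed
  then have "dist (y t0 - t0 *\<^sub>R v0) (y (t0 - \<tau>) - (t0 - \<tau>) *\<^sub>R v0) \<le> e * dist t0 (t0 - \<tau>)"
    using \<tau> by (intro lipschitz_onD) auto
  then have "norm (x0 - y (t0 - \<tau>) - \<tau> *\<^sub>R v0) \<le> e * \<tau>"
    using y0 \<tau> by (simp add: dist_norm dist_real_def algebra_simps)
  with y0 \<open>abs_cont_on (t0 - \<tau>) t0 y\<close> in_rect y' show ?thesis using that by blast
qed

locale bolza_lagrangian =
  fixes T :: real and L :: "real \<Rightarrow> 'a::euclidean_space \<Rightarrow> 'a \<Rightarrow> ereal"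
  assumes lsc: "lsc_on {(t, x, v). t \<in> {0..T}} (\<lambda>(t, x, v). L t x v)"
    and convex_proper: "\<forall>t\<in>{0..T}. \<forall>x. ereal_convex (L t x) \<and> proper_fn (L t x)"
    and approximable: "\<forall>t\<in>{0..T}. \<forall>x v. \<forall>tn xn. (\<forall>n. tn n \<in> {0..T}) \<longrightarrow>
               tn \<longlonglongrightarrow> t \<longrightarrow> xn \<longlonglongrightarrow> x \<longrightarrow>
               (\<exists>vn. vn \<longlonglongrightarrow> v \<and> (\<lambda>n. L (tn n) (xn n) (vn n)) \<longlonglongrightarrow> L t x v)"
begin

lemma not_MInfty: "t \<in> {0..T} \<Longrightarrow> L t x v \<noteq> -\<infinity>"
  using convex_proper unfolding proper_fn_def by blast

lemma sublevel_lower_hemicontinuous: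
  assumes t: "t \<in> {0..T}" and Lc: "L t x v < ereal c" and dv: "dist v w < e" and e1: "e1 > 0"
  obtains d where "d > 0" "\<And>t' x'. t' \<in> {0..T} \<Longrightarrow> dist (t', x') (t, x) < d \<Longrightarrow>
           \<exists>v'. dist v' v < e1 \<and> dist v' w < e \<and> L t' x' v' < ereal c"
proof -
  have "\<exists>d>0. \<forall>t' x'. t' \<in> {0..T} \<longrightarrow> dist (t', x') (t, x) < d \<longrightarrow>
           (\<exists>v'. dist v' v < e1 \<and> dist v' w < e \<and> L t' x' v' < ereal c)"
  proof (rule ccontr)
    assume "\<not> ?thesis"
    then have "\<forall>n::nat. \<exists>t' x'. t' \<in> {0..T} \<and> dist (t', x') (t, x) < 1 / real (Suc n) \<and>
             (\<forall>v'. \<not> (dist v' v < e1 \<and> dist v' w < e \<and> L t' x' v' < ereal c))"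
      by (metis of_nat_0_less_iff zero_less_Suc zero_less_divide_1_iff)
    then obtain tn xn where tn: "\<And>n. tn n \<in> {0..T}" and dn: "\<And>n. dist (tn n, xn n) (t, x) < 1 / real (Suc n)"
      and bad: "\<And>n v'. \<not> (dist v' v < e1 \<and> dist v' w < e \<and> L (tn n) (xn n) v' < ereal c)"
      by metis
    have "(\<lambda>n. (tn n, xn n)) \<longlonglongrightarrow> (t, x)"
    proof (rule tendsto_dist_iff[THEN iffD2], rule Lim_null_comparison)
      show "\<forall>\<^sub>F n in sequentially. norm (dist (tn n, xn n) (t, x)) \<le> 1 / real (Suc n)"
        using dn by (simp add: less_imp_le)
      show "(\<lambda>n. 1 / real (Suc n)) \<longlonglongrightarrow> 0" by (rule LIMSEQ_Suc[OF lim_const_over_n])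
    qed
    then have "tn \<longlonglongrightarrow> t" "xn \<longlonglongrightarrow> x"
      using tendsto_fst tendsto_snd by fastforce+
    then obtain vn where vn: "vn \<longlonglongrightarrow> v" "(\<lambda>n. L (tn n) (xn n) (vn n)) \<longlonglongrightarrow> L t x v"
      using approximable t tn by blast
    have "\<forall>\<^sub>F n in sequentially. dist (vn n) v < e1"
      using vn(1) e1 by (rule tendstoD)
    moreover have "\<forall>\<^sub>F n in sequentially. dist (vn n) w < e"
      using tendsto_dist[OF vn(1) tendsto_const] dv by (rule order_tendstoD)
    moreover have "\<forall>\<^sub>F n in sequentially. L (tn n) (xn n) (vn n) < ereal c"
      using vn(2) Lc by (rule order_tendstoD)
    ultimately have "\<forall>\<^sub>F n in sequentially. False"
      by eventually_elim (use bad in blast)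
    then show False by simp
  qed
  then show ?thesis using that by blast
qed

lemma closure_sublevel:
  assumes t: "t \<in> {0..T}" and v: "v \<in> closure (ball v0 e \<inter> {v. L t x v < ereal c})"
  shows "dist v v0 \<le> e \<and> L t x v \<le> ereal c"
proof
  have "closure (ball v0 e \<inter> {v. L t x v < ereal c}) \<subseteq> cball v0 e"
    by (intro closure_minimal) auto
  then show "dist v v0 \<le> e" using v by (auto simp: dist_commute)
  obtain X where X: "\<And>n. X n \<in> ball v0 e \<inter> {v. L t x v < ereal c}" "X \<longlonglongrightarrow> v"
    using v closure_sequential by metis
  have "(\<lambda>n. (t, x, X n)) \<longlonglongrightarrow> (t, x, v)" using X(2) by (intro tendsto_intros)
  then have "L t x v \<le> liminf (\<lambda>n. L t x (X n))"
    using lsc[unfolded lsc_on_def, rule_format, of "(t, x, v)" "\<lambda>n. (t, x, X n)"] t by auto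
  also have "\<dots> \<le> ereal c" using X(1) by (intro Liminf_le) (auto simp: less_imp_le)
  finally show "L t x v \<le> ereal c" .
qed

lemma continuous_near_optimal_velocity_field:
  assumes t0: "t0 \<in> {0<..T}" and L0: "L t0 x0 v0 = ereal L0" and e: "e > 0"
  obtains \<rho> f where "0 < \<rho>" "\<rho> \<le> t0" "continuous_on ({t0 - \<rho>..t0} \<times> cball x0 \<rho>) f"
    "\<And>p. p \<in> {t0 - \<rho>..t0} \<times> cball x0 \<rho> \<Longrightarrow> dist (f p) v0 \<le> e \<and> L (fst p) (snd p) (f p) \<le> ereal (L0 + e)"
proof -
  define \<Phi> where "\<Phi> p = ball v0 e \<inter> {v. L (fst p) (snd p) v < ereal (L0 + e)}" for p
  obtain d where "d > 0" and d: "\<And>t x. t \<in> {0..T} \<Longrightarrow> dist (t, x) (t0, x0) < d \<Longrightarrow>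
      \<exists>v. dist v v0 < 1 \<and> dist v v0 < e \<and> L t x v < ereal (L0 + e)"
    using sublevel_lower_hemicontinuous[of t0 x0 v0 "L0 + e" v0 e 1] t0 L0 e by auto
  define \<rho> where "\<rho> = min (d/3) t0"
  have \<rho>: "0 < \<rho>" "\<rho> \<le> t0" using \<open>d > 0\<close> t0 by (auto simp: \<rho>_def)
  define K where "K = {t0 - \<rho>..t0} \<times> cball x0 \<rho>"
  have K_time: "fst p \<in> {0..T}" if "p \<in> K" for p using that \<rho> t0 by (auto simp: K_def)
  have "compact K" unfolding K_def by (intro compact_Times compact_Icc compact_cball)
  moreover have "\<Phi> p \<noteq> {}" if p: "p \<in> K" for p
  proof -
    have "dist p (t0, x0) \<le> dist (fst p) t0 + dist (snd p) x0"
      using dist_Pair_le_add[of "fst p" "snd p" t0 x0] by simp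
    also have "\<dots> < d" using p \<open>d > 0\<close> by (auto simp: K_def \<rho>_def dist_real_def dist_commute)
    finally have "dist p (t0, x0) < d" .
    then obtain v where "dist v v0 < e" "L (fst p) (snd p) v < ereal (L0 + e)"
      using d[of "fst p" "snd p"] K_time[OF p] by auto
    then have "v \<in> \<Phi> p" by (simp add: \<Phi>_def dist_commute)
    then show ?thesis by blast
  qed
  moreover have "convex (\<Phi> p)" if "p \<in> K" for p
    unfolding \<Phi>_def using convex_proper K_time[OF that] not_MInfty[OF K_time[OF that]]
    by (intro convex_Int convex_ball convex_ereal_strict_sublevel) auto
  moreover have "lower_hemicontinuous_on K \<Phi>"
    unfolding lower_hemicontinuous_on_def
  proof (intro ballI allI impI)
    fix p v and e1 :: real assume p: "p \<in> K" and v: "v \<in> \<Phi> p" and "e1 > 0"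
    obtain d' where "d' > 0" and d': "\<And>t' x'. t' \<in> {0..T} \<Longrightarrow> dist (t', x') (fst p, snd p) < d' \<Longrightarrow>
        \<exists>v'. dist v' v < e1 \<and> dist v' v0 < e \<and> L t' x' v' < ereal (L0 + e)"
      using sublevel_lower_hemicontinuous[OF K_time[OF p], of "snd p" v "L0 + e" v0 e e1] v \<open>e1 > 0\<close>
      by (auto simp: \<Phi>_def dist_commute)
    show "\<exists>d>0. \<forall>q\<in>K. dist q p < d \<longrightarrow> (\<exists>w\<in>\<Phi> q. dist w v < e1)"
      using d' K_time \<open>d' > 0\<close> by (force simp: \<Phi>_def dist_commute)
  qed
  ultimately obtain f where "continuous_on K f" and f: "\<And>p. p \<in> K \<Longrightarrow> f p \<in> closure (\<Phi> p)"
    using michael_selection by blast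
  moreover have "dist (f p) v0 \<le> e \<and> L (fst p) (snd p) (f p) \<le> ereal (L0 + e)" if "p \<in> K" for p
    using closure_sublevel[OF K_time[OF that] f[OF that, unfolded \<Phi>_def]] .
  ultimately show ?thesis using that \<rho> unfolding K_def by blast
qed

text \<open>The arc solves \<open>y' = f(t, y)\<close> backwards from \<open>(t0, x0)\<close> for the continuous selection \<open>f\<close>
  of near-optimal velocities constructed above.\<close>
lemma near_optimal_backward_arc:
  assumes t0: "t0 \<in> {0<..T}" and L0: "L t0 x0 v0 = ereal L0" and e: "e > 0" and \<delta>: "\<delta> > 0"
  obtains \<tau> y where "0 < \<tau>" "\<tau> < \<delta>" "\<tau> \<le> t0" "y t0 = x0" "abs_cont_on (t0 - \<tau>) t0 y"
    "norm (x0 - y (t0 - \<tau>) - \<tau> *\<^sub>R v0) \<le> e * \<tau>"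
    "arc_cost L (t0 - \<tau>) t0 y \<le> ereal (\<tau> * (L0 + e))"
proof -
  obtain \<rho> f where \<rho>: "0 < \<rho>" "\<rho> \<le> t0" and cont: "continuous_on ({t0 - \<rho>..t0} \<times> cball x0 \<rho>) f"
    and f: "\<And>p. p \<in> {t0 - \<rho>..t0} \<times> cball x0 \<rho> \<Longrightarrow> dist (f p) v0 \<le> e \<and> L (fst p) (snd p) (f p) \<le> ereal (L0 + e)"
    using continuous_near_optimal_velocity_field[OF t0 L0 e] by blast
  define N where "N = norm v0 + e + 1"
  have N: "N > 0" unfolding N_def using e norm_ge_zero[of v0] by linarith
  define \<tau> where "\<tau> = min (\<delta>/2) (\<rho> / N)"
  have \<tau>: "0 < \<tau>" "\<tau> < \<delta>" using \<delta> \<rho> N by (auto simp: \<tau>_def)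
  have "\<tau> \<le> \<rho> / N" by (simp add: \<tau>_def)
  then have "N * \<tau> \<le> \<rho>" using N by (simp add: pos_le_divide_eq mult.commute)
  moreover have "N * \<tau> = (norm v0 + e) * \<tau> + \<tau>" by (simp add: N_def algebra_simps)
  moreover have "0 \<le> (norm v0 + e) * \<tau>" using \<tau> e by simp
  ultimately have \<tau>': "\<tau> \<le> \<rho>" "(norm v0 + e) * \<tau> \<le> \<rho>" using \<tau> by linarith+
  have near_v0: "\<And>p. p \<in> {t0 - \<rho>..t0} \<times> cball x0 \<rho> \<Longrightarrow> dist (f p) v0 \<le> e" using f by blast
  obtain y where y0: "y t0 = x0" and ac: "abs_cont_on (t0 - \<tau>) t0 y"
    and in_rect: "\<And>t. t \<in> {t0 - \<tau>..t0} \<Longrightarrow> (t, y t) \<in> {t0 - \<rho>..t0} \<times> cball x0 \<rho>"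
    and y': "\<And>t. t \<in> {t0 - \<tau>..t0} \<Longrightarrow> (y has_vector_derivative f (t, y t)) (at t within {t0 - \<tau>..t0})"
    and endpoint: "norm (x0 - y (t0 - \<tau>) - \<tau> *\<^sub>R v0) \<le> e * \<tau>"
    using backward_trajectory[OF cont near_v0 less_imp_le[OF e] \<tau>(1) \<tau>'] by blast
  define C where "C = {t0 - \<tau>..t0} \<times> cball x0 \<rho> \<times> cball v0 e"
  have "compact C" unfolding C_def by (intro compact_Times compact_Icc compact_cball)
  have C_time: "C \<subseteq> {(t, x, v). t \<in> {0..T}}" using \<tau>' \<rho> t0 by (auto simp: C_def)
  then have "\<forall>p\<in>C. (\<lambda>(t, x, v). L t x v) p \<noteq> -\<infinity>" using not_MInfty by auto
  then obtain B where B: "\<forall>p\<in>C. ereal B \<le> (\<lambda>(t, x, v). L t x v) p"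
    using lsc_on_compact_bounded_below[OF lsc \<open>compact C\<close> C_time] by blast
  have "arc_cost L (t0 - \<tau>) t0 y \<le> ereal ((L0 + e) * (t0 - (t0 - \<tau>)))"
    unfolding arc_cost_def
  proof (rule ext_integral_le_const)
    fix t assume t: "t \<in> {t0 - \<tau><..<t0}"
    have deriv: "vector_derivative y (at t within {t0 - \<tau>..t0}) = f (t, y t)"
      using vector_derivative_within_cbox[of "t0 - \<tau>" t0 t y] y'[of t] \<tau>(1) t by (simp add: cbox_interval)
    have "(t, y t) \<in> {t0 - \<rho>..t0} \<times> cball x0 \<rho>" using t in_rect[of t] by auto
    then have in_C: "(t, y t, f (t, y t)) \<in> C" and le: "L t (y t) (f (t, y t)) \<le> ereal (L0 + e)"
      using t f[of "(t, y t)"] by (auto simp: C_def dist_commute)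
    have "ereal B \<le> L t (y t) (f (t, y t))" using B in_C by fastforce
    then show "ereal B \<le> L t (y t) (vector_derivative y (at t within {t0 - \<tau>..t0})) \<and>
        L t (y t) (vector_derivative y (at t within {t0 - \<tau>..t0})) \<le> ereal (L0 + e)"
      using deriv le by simp
  qed (use \<tau> in simp)
  then show ?thesis using that \<tau> \<tau>' \<rho> y0 ac endpoint by (simp add: mult.commute)
qed

lemma value_fn_backward_difference_le:
  assumes t0: "t0 \<in> {0<..T}" and L0: "L t0 x0 v0 = ereal L0" and \<epsilon>: "\<epsilon> > 0" and r: "r > 0" and \<delta>: "\<delta> > 0"
  obtains \<tau> u where "0 < \<tau>" "\<tau> < \<delta>" "dist u v0 < r"
    "value_fn T L g (t0 - \<tau>, x0 - \<tau> *\<^sub>R u) \<le> value_fn T L g (t0, x0) + ereal (\<tau> * (L0 + \<epsilon>))"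
proof -
  define e where "e = min (r/2) \<epsilon>"
  have e: "0 < e" "e < r" "e \<le> \<epsilon>" using \<epsilon> r by (auto simp: e_def)
  obtain \<tau> y where \<tau>: "0 < \<tau>" "\<tau> < \<delta>" "\<tau> \<le> t0" and y0: "y t0 = x0" and ac: "abs_cont_on (t0 - \<tau>) t0 y"
    and endpoint: "norm (x0 - y (t0 - \<tau>) - \<tau> *\<^sub>R v0) \<le> e * \<tau>"
    and cost: "arc_cost L (t0 - \<tau>) t0 y \<le> ereal (\<tau> * (L0 + e))"
    using near_optimal_backward_arc[OF t0 L0 e(1) \<delta>] by blast
  define u where "u = (1/\<tau>) *\<^sub>R (x0 - y (t0 - \<tau>))"
  have "u - v0 = (1/\<tau>) *\<^sub>R (x0 - y (t0 - \<tau>) - \<tau> *\<^sub>R v0)"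
    using \<tau>(1) by (simp add: u_def algebra_simps)
  then have "dist u v0 = (1/\<tau>) * norm (x0 - y (t0 - \<tau>) - \<tau> *\<^sub>R v0)"
    using \<tau>(1) by (simp add: dist_norm)
  also have "\<dots> \<le> e" using endpoint \<tau>(1) by (simp add: field_simps)
  finally have "dist u v0 < r" using e by simp
  have "x0 - \<tau> *\<^sub>R u = y (t0 - \<tau>)" using \<tau>(1) by (simp add: u_def)
  then have "value_fn T L g (t0 - \<tau>, x0 - \<tau> *\<^sub>R u) \<le> arc_cost L (t0 - \<tau>) t0 y + value_fn T L g (t0, x0)"
    using value_fn_le_arc_cost[OF _ _ _ ac, of T L g] \<tau> t0 y0 by simp
  also have "\<dots> \<le> ereal (\<tau> * (L0 + e)) + value_fn T L g (t0, x0)" using cost by (rule add_right_mono)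
  also have "\<dots> \<le> ereal (\<tau> * (L0 + \<epsilon>)) + value_fn T L g (t0, x0)"
    using \<tau>(1) e(3) by (intro add_right_mono) simp
  also have "\<dots> = value_fn T L g (t0, x0) + ereal (\<tau> * (L0 + \<epsilon>))" by (rule add.commute)
  finally show ?thesis using that \<tau> \<open>dist u v0 < r\<close> by blast
qed

end

theorem theorem5p5:
  fixes T :: real
    and L :: "real \<Rightarrow> 'a::euclidean_space \<Rightarrow> 'a \<Rightarrow> ereal"
    and g :: "'a \<Rightarrow> ereal"
    and c :: "real \<Rightarrow> real"
    and \<N> :: "real set"
  assumes L1: "lsc_on {(t, x, v). t \<in> {0..T}} (\<lambda>(t, x, v). L t x v)"
    and L2: "\<forall>t\<in>{0..T}. \<forall>x. ereal_convex (L t x) \<and> proper_fn (L t x)"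
    and L3: "\<forall>t\<in>{0..T}. \<forall>x v. \<forall>tn xn. (\<forall>n. tn n \<in> {0..T}) \<longrightarrow>
               tn \<longlonglongrightarrow> t \<longrightarrow> xn \<longlonglongrightarrow> x \<longrightarrow>
               (\<exists>vn. vn \<longlonglongrightarrow> v \<and> (\<lambda>n. L (tn n) (xn n) (vn n)) \<longlonglongrightarrow> L t x v)"
    and L4: "\<forall>R\<ge>0. \<exists>CR\<ge>0. \<forall>t\<in>{0..T}. \<forall>x v. norm x \<le> R \<longrightarrow> norm v > CR \<longrightarrow> L t x v = \<infinity>"
    and L5_int: "c integrable_on {0..T}" and L5_nonneg: "\<forall>t\<in>{0..T}. 0 \<le> c t"
    and L5_null: "\<N> \<in> null_sets lebesgue"
    and L5: "\<forall>t\<in>{0..T} - \<N>. \<forall>x v. norm v > c t * (1 + norm x) \<longrightarrow> L t x v = \<infinity>"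
    and g_proper: "proper_fn g"
    and g_lsc: "lsc_on UNIV g"
    and t0: "t0 \<in> {0<..T}"
    and domV: "\<bar>value_fn T L g (t0, x0)\<bar> \<noteq> \<infinity>"
    and domL: "\<bar>L t0 x0 v0\<bar> \<noteq> \<infinity>"
  shows "subderiv (value_fn T L g) (t0, x0) (-1, -v0) \<le> L t0 x0 v0"
proof -
  interpret bolza_lagrangian T L using L1 L2 L3 by unfold_locales
  obtain L0 where L0: "L t0 x0 v0 = ereal L0" using domL by (cases "L t0 x0 v0") auto
  have "subderiv (value_fn T L g) (t0, x0) (-1, -v0) \<le> ereal L0"
  proof (rule subderiv_leI)
    show "\<bar>value_fn T L g (t0, x0)\<bar> \<noteq> \<infinity>" by (fact domV)
    fix \<epsilon> r \<delta> :: real assume "\<epsilon> > 0" "r > 0" "\<delta> > 0"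
    then obtain \<tau> u where "0 < \<tau>" "\<tau> < \<delta>" "dist u v0 < r"
      and "value_fn T L g (t0 - \<tau>, x0 - \<tau> *\<^sub>R u) \<le> value_fn T L g (t0, x0) + ereal (\<tau> * (L0 + \<epsilon>))"
      using value_fn_backward_difference_le[OF t0 L0] by blast
    moreover have "dist (-1, -u) (-1, -v0) < r" using \<open>dist u v0 < r\<close> by (simp add: dist_Pair_Pair dist_minus)
    ultimately show "\<exists>\<tau> w. 0 < \<tau> \<and> \<tau> < \<delta> \<and> dist w (-1, -v0) < r \<and>
        value_fn T L g ((t0, x0) + \<tau> *\<^sub>R w) \<le> value_fn T L g (t0, x0) + ereal (\<tau> * (L0 + \<epsilon>))"
      by (intro exI[of _ \<tau>] exI[of _ "(-1, -u)"]) (simp add: algebra_simps)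
  qed
  then show ?thesis using L0 by simp
qed

end
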